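(* Let $M$ be a complex manifold of complex dimension $2k+1$ ($k\ge1$), and let $\omega$ be a singular contact structure on $M$ of the first type with structurally smooth Martinet hypersurface $S$. If a holomorphic vector field $X$ on $M$ is an infinitesimal contact transformation of $\omega$, then the restriction $X|_S$ is a holomorphic vector field tangent to $S$.
   Context: A singular contact form on $M$ is a collection $\{(U_i,\omega_i)\}$ with $\{U_i\}$ an open cover and $\omega_i$ holomorphic $1$-forms on $U_i$ such that $\omega_i\wedge(d\omega_i)^k$ vanishes only on a nowhere dense subset of $U_i$ and $\omega_i=f_{ij}\omega_j$ on overlaps with $f_{ij}$ nowhere vanishing holomorphic; a singular contact structure is the equivalence class of such under multiplication by nowhere vanishing holomorphic functions. The Martinet hypersurface is $S=\{\omega_i\wedge(d\omega_i)^k=0\}$; writing $\omega_i\wedge(d\omega_i)^k=H_i\Omega_i$ with $\Omega_i$ a nowhere vanishing $(2k+1)$-form, $S$ is structurally smooth if $dH_i\neq0$ on $S$. First type means each $\omega_i$ is nowhere vanishing. A holomorphic vector field $X$ is an infinitesimal contact transformation if $\mathcal{L}_X\omega_i=h_i\omega_i$ for holomorphic functions $h_i$. *)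

theory Defs
  imports "HOL-Analysis.Analysis"
begin

definition holo_fun_on :: "(complex^'n) set \<Rightarrow> (complex^'n \<Rightarrow> complex) \<Rightarrow> bool" where
  "holo_fun_on U f \<longleftrightarrow> open U \<and>
     (\<forall>x\<in>U. \<exists>L. (f has_derivative L) (at x) \<and> (\<forall>c v. L (c *s v) = c * L v))"

definition holo_map_on :: "(complex^'n) set \<Rightarrow> (complex^'n \<Rightarrow> complex^'m) \<Rightarrow> bool" where
  "holo_map_on U F \<longleftrightarrow> (\<forall>j. holo_fun_on U (\<lambda>x. F x $ j))"

text \<open>Pairing of a covector (coefficient vector of a 1-form in the basis dz_j) with a vector.\<close>
definition cpair :: "complex^'n \<Rightarrow> complex^'n \<Rightarrow> complex" where
  "cpair a v = (\<Sum>j\<in>UNIV. a $ j * v $ j)"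

type_synonym ('m,'n) chart = "'m set \<times> ('m \<Rightarrow> complex^'n)"

definition holo_atlas :: "('m::topological_space, 'n::finite) chart set \<Rightarrow> bool" where
  "holo_atlas A \<longleftrightarrow>
     (\<forall>(V,\<phi>)\<in>A. open V \<and> open (\<phi> ` V) \<and> (\<exists>\<psi>. homeomorphism V (\<phi> ` V) \<phi> \<psi>)) \<and>
     (\<Union>(V,\<phi>)\<in>A. V) = UNIV \<and>
     (\<forall>(V,\<phi>)\<in>A. \<forall>(W,\<psi>)\<in>A. holo_map_on (\<phi> ` (V \<inter> W)) (\<psi> \<circ> inv_into V \<phi>))"

text \<open>A complex manifold of complex dimension n = CARD('n): the (Hausdorff, second countable)
space 'm with a holomorphic atlas.\<close>
definition complex_manifold :: "('m::{t2_space,second_countable_topology}, 'n::finite) chart set \<Rightarrow> bool" where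
  "complex_manifold A \<longleftrightarrow> holo_atlas A"

definition loc :: "('m, 'n) chart \<Rightarrow> ('m \<Rightarrow> 'b) \<Rightarrow> complex^'n \<Rightarrow> 'b" where
  "loc c g = (\<lambda>x. g (inv_into (fst c) (snd c) x))"

definition trans_deriv :: "('m, 'n) chart \<Rightarrow> ('m, 'n) chart \<Rightarrow> 'm \<Rightarrow> complex^'n \<Rightarrow> complex^'n" where
  "trans_deriv c d p = frechet_derivative (snd d \<circ> inv_into (fst c) (snd c)) (at (snd c p))"

definition mholo_fun :: "('m::topological_space, 'n::finite) chart set \<Rightarrow> 'm set \<Rightarrow> ('m \<Rightarrow> complex) \<Rightarrow> bool" where
  "mholo_fun A U f \<longleftrightarrow> open U \<and>
     (\<forall>c\<in>A. holo_fun_on (snd c ` (U \<inter> fst c)) (loc c f))"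

text \<open>A holomorphic 1-form on the open set U, given by its coefficient vector
w c p (in the basis dz_1..dz_n of the chart c) at each point p of the chart domain;
the coefficients transform covariantly under chart changes.\<close>
definition holo_1form :: "('m::topological_space, 'n::finite) chart set \<Rightarrow> 'm set
     \<Rightarrow> (('m,'n) chart \<Rightarrow> 'm \<Rightarrow> complex^'n) \<Rightarrow> bool" where
  "holo_1form A U w \<longleftrightarrow> open U \<and>
     (\<forall>c\<in>A. holo_map_on (snd c ` (U \<inter> fst c)) (loc c (w c))) \<and>
     (\<forall>c\<in>A. \<forall>d\<in>A. \<forall>p\<in>U \<inter> fst c \<inter> fst d. \<forall>v.
        cpair (w c p) v = cpair (w d p) (trans_deriv c d p v))"

text \<open>A holomorphic vector field on M, given by its components in each chart,
transforming contravariantly under chart changes.\<close>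
definition holo_vfield :: "('m::topological_space, 'n::finite) chart set
     \<Rightarrow> (('m,'n) chart \<Rightarrow> 'm \<Rightarrow> complex^'n) \<Rightarrow> bool" where
  "holo_vfield A X \<longleftrightarrow>
     (\<forall>c\<in>A. holo_map_on (snd c ` fst c) (loc c (X c))) \<and>
     (\<forall>c\<in>A. \<forall>d\<in>A. \<forall>p\<in>fst c \<inter> fst d. X d p = trans_deriv c d p (X c p))"

text \<open>A p-form at a point is a function of a sequence of vectors (only the first p entries
matter).  Wedge product with the standard normalisation 1/(p! q!).\<close>
definition wedge :: "nat \<Rightarrow> nat \<Rightarrow> ((nat \<Rightarrow> 'v) \<Rightarrow> complex) \<Rightarrow> ((nat \<Rightarrow> 'v) \<Rightarrow> complex)
                      \<Rightarrow> (nat \<Rightarrow> 'v) \<Rightarrow> complex" where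
  "wedge p q \<alpha> \<beta> = (\<lambda>v.
     (\<Sum>\<sigma>\<in>{\<sigma>. \<sigma> permutes {..<p+q}}.
        of_int (sign \<sigma>) * \<alpha> (v \<circ> \<sigma>) * \<beta> (\<lambda>i. v (\<sigma> (p + i)))) / (fact p * fact q))"

fun wpow2 :: "((nat \<Rightarrow> 'v) \<Rightarrow> complex) \<Rightarrow> nat \<Rightarrow> (nat \<Rightarrow> 'v) \<Rightarrow> complex" where
  "wpow2 \<beta> 0 = (\<lambda>v. 1)"
| "wpow2 \<beta> (Suc m) = wedge 2 (2*m) \<beta> (wpow2 \<beta> m)"

definition form1 :: "(complex^'n \<Rightarrow> complex^'n) \<Rightarrow> complex^'n \<Rightarrow> (nat \<Rightarrow> complex^'n) \<Rightarrow> complex" where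
  "form1 a x = (\<lambda>v. cpair (a x) (v 0))"

definition dform1 :: "(complex^'n \<Rightarrow> complex^'n) \<Rightarrow> complex^'n \<Rightarrow> (nat \<Rightarrow> complex^'n) \<Rightarrow> complex" where
  "dform1 a x = (\<lambda>v. cpair (frechet_derivative a (at x) (v 0)) (v 1)
                   - cpair (frechet_derivative a (at x) (v 1)) (v 0))"

definition contact_top :: "nat \<Rightarrow> (complex^'n \<Rightarrow> complex^'n) \<Rightarrow> complex^'n \<Rightarrow> (nat \<Rightarrow> complex^'n) \<Rightarrow> complex" where
  "contact_top k a x = wedge 1 (2*k) (form1 a x) (wpow2 (dform1 a x) k)"

text \<open>A fixed ordering of the coordinate index type, giving the coordinate volume form
Omega = dz_1 \<and> ... \<and> dz_n.\<close>
definition coord_order :: "nat \<Rightarrow> 'n::finite" where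
  "coord_order = (SOME f. bij_betw f {..<CARD('n)} UNIV)"

text \<open>The function H with omega \<and> (d omega)^k = H \<cdot> dz_1 \<and> ... \<and> dz_n (when 2k+1 = n).\<close>
definition contact_H :: "nat \<Rightarrow> (complex^'n::finite \<Rightarrow> complex^'n) \<Rightarrow> complex^'n \<Rightarrow> complex" where
  "contact_H k a x = contact_top k a x (\<lambda>i. axis (coord_order i) 1)"

definition Hloc :: "nat \<Rightarrow> (('m,'n::finite) chart \<Rightarrow> 'm \<Rightarrow> complex^'n) \<Rightarrow> ('m,'n) chart \<Rightarrow> complex^'n \<Rightarrow> complex" where
  "Hloc k w c = contact_H k (loc c (w c))"

definition vanishing_set :: "nat \<Rightarrow> ('m, 'n::finite) chart set \<Rightarrow> 'm set
     \<Rightarrow> (('m,'n) chart \<Rightarrow> 'm \<Rightarrow> complex^'n) \<Rightarrow> 'm set" where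
  "vanishing_set k A U w =
     {p\<in>U. \<forall>c\<in>A. p \<in> fst c \<longrightarrow> contact_top k (loc c (w c)) (snd c p) = (\<lambda>v. 0)}"

definition nowhere_dense_in :: "'a::topological_space set \<Rightarrow> 'a set \<Rightarrow> bool" where
  "nowhere_dense_in Z U \<longleftrightarrow> interior (closure Z \<inter> U) = {}"

definition singular_contact_form :: "nat \<Rightarrow> ('m::topological_space, 'n::finite) chart set
     \<Rightarrow> ('i \<Rightarrow> 'm set) \<Rightarrow> ('i \<Rightarrow> ('m,'n) chart \<Rightarrow> 'm \<Rightarrow> complex^'n) \<Rightarrow> bool" where
  "singular_contact_form k A U w \<longleftrightarrow>
     (\<forall>i. open (U i)) \<and> (\<Union>i. U i) = UNIV \<and>
     (\<forall>i. holo_1form A (U i) (w i)) \<and>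
     (\<forall>i. nowhere_dense_in (vanishing_set k A (U i) (w i)) (U i)) \<and>
     (\<forall>i j. \<exists>f. mholo_fun A (U i \<inter> U j) f \<and> (\<forall>p\<in>U i \<inter> U j. f p \<noteq> 0) \<and>
              (\<forall>c\<in>A. \<forall>p\<in>U i \<inter> U j \<inter> fst c. w i c p = f p *s w j c p))"

definition first_type :: "('m, 'n::finite) chart set \<Rightarrow> ('i \<Rightarrow> 'm set)
     \<Rightarrow> ('i \<Rightarrow> ('m,'n) chart \<Rightarrow> 'm \<Rightarrow> complex^'n) \<Rightarrow> bool" where
  "first_type A U w \<longleftrightarrow> (\<forall>i. \<forall>c\<in>A. \<forall>p\<in>U i \<inter> fst c. w i c p \<noteq> 0)"

definition martinet :: "nat \<Rightarrow> ('m, 'n::finite) chart set \<Rightarrow> ('i \<Rightarrow> 'm set)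
     \<Rightarrow> ('i \<Rightarrow> ('m,'n) chart \<Rightarrow> 'm \<Rightarrow> complex^'n) \<Rightarrow> 'm set" where
  "martinet k A U w = (\<Union>i. vanishing_set k A (U i) (w i))"

text \<open>Structurally smooth: dH_i \<noteq> 0 on S (H_i taken w.r.t. the coordinate volume form).\<close>
definition structurally_smooth :: "nat \<Rightarrow> ('m, 'n::finite) chart set \<Rightarrow> ('i \<Rightarrow> 'm set)
     \<Rightarrow> ('i \<Rightarrow> ('m,'n) chart \<Rightarrow> 'm \<Rightarrow> complex^'n) \<Rightarrow> bool" where
  "structurally_smooth k A U w \<longleftrightarrow>
     (\<forall>i. \<forall>c\<in>A. \<forall>p\<in>martinet k A U w \<inter> U i \<inter> fst c.
        frechet_derivative (Hloc k (w i) c) (at (snd c p)) \<noteq> (\<lambda>v. 0))"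

definition lie_1form :: "(complex^'n \<Rightarrow> complex^'n) \<Rightarrow> (complex^'n \<Rightarrow> complex^'n)
     \<Rightarrow> complex^'n \<Rightarrow> complex^'n \<Rightarrow> complex" where
  "lie_1form Y a x v = cpair (frechet_derivative a (at x) (Y x)) v
                      + cpair (a x) (frechet_derivative Y (at x) v)"

definition inf_contact_transf :: "('m::topological_space, 'n::finite) chart set \<Rightarrow> ('i \<Rightarrow> 'm set)
     \<Rightarrow> ('i \<Rightarrow> ('m,'n) chart \<Rightarrow> 'm \<Rightarrow> complex^'n) \<Rightarrow> (('m,'n) chart \<Rightarrow> 'm \<Rightarrow> complex^'n) \<Rightarrow> bool" where
  "inf_contact_transf A U w X \<longleftrightarrow>
     (\<forall>i. \<exists>h. mholo_fun A (U i) h \<and>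
        (\<forall>c\<in>A. \<forall>p\<in>U i \<inter> fst c. \<forall>v.
           lie_1form (loc c (X c)) (loc c (w i c)) (snd c p) v = h p * cpair (w i c p) v))"

definition tangent_to_martinet :: "nat \<Rightarrow> ('m, 'n::finite) chart set \<Rightarrow> ('i \<Rightarrow> 'm set)
     \<Rightarrow> ('i \<Rightarrow> ('m,'n) chart \<Rightarrow> 'm \<Rightarrow> complex^'n) \<Rightarrow> (('m,'n) chart \<Rightarrow> 'm \<Rightarrow> complex^'n) \<Rightarrow> bool" where
  "tangent_to_martinet k A U w X \<longleftrightarrow>
     (\<forall>i. \<forall>c\<in>A. \<forall>p\<in>martinet k A U w \<inter> U i \<inter> fst c.
        frechet_derivative (Hloc k (w i) c) (at (snd c p)) (X c p) = 0)"

end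

theory Submission
  imports Defs "HOL-Complex_Analysis.Cauchy_Integral_Formula"
begin

text \<open>Work in a chart with \<open>\<omega> = \<omega>\<^sub>i\<close> and \<open>\<omega> \<and> (d\<omega>)^k = H dz\<^sub>1 \<and> \<dots> \<and> dz\<^sub>n\<close>. From \<open>L\<^sub>X \<omega> = h \<omega>\<close> and
  \<open>L\<^sub>X d\<omega> = d L\<^sub>X \<omega> = h d\<omega> + dh \<and> \<omega>\<close> one gets \<open>L\<^sub>X (\<omega> \<and> (d\<omega>)^k) = (k+1) h \<omega> \<and> (d\<omega>)^k\<close>, while
  \<open>L\<^sub>X (H dz\<^sub>1 \<and> \<dots> \<and> dz\<^sub>n) = (X H + H div X) dz\<^sub>1 \<and> \<dots> \<and> dz\<^sub>n\<close>. Hence \<open>X H = 0\<close> wherever \<open>H = 0\<close>,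
  i.e. on the Martinet hypersurface, which does not depend on the choice of local form because
  \<open>\<omega>\<^sub>i = f \<omega>\<^sub>j\<close> multiplies \<open>\<omega> \<and> (d\<omega>)^k\<close> by \<open>f\<^sup>k\<^sup>+\<^sup>1\<close>.
  In coordinates all of this is a computation with the alternating sum defining \<open>\<omega> \<and> (d\<omega>)^k\<close>;
  the identity \<open>d L\<^sub>X \<omega> = L\<^sub>X d\<omega>\<close> needs the symmetry of second derivatives, and the existence of those
  second derivatives is obtained from Cauchy's integral formula.\<close>

section \<open>Alternating sums and wedge products\<close>

definition alternation :: "nat \<Rightarrow> ((nat \<Rightarrow> 'v) \<Rightarrow> complex) \<Rightarrow> (nat \<Rightarrow> 'v) \<Rightarrow> complex" where
  "alternation n F v = (\<Sum>\<rho>\<in>{\<rho>. \<rho> permutes {..<n}}. of_int (sign \<rho>) * F (v \<circ> \<rho>))"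

lemma alternation_add: "alternation n (\<lambda>u. F u + G u) v = alternation n F v + alternation n G v"
  by (simp add: alternation_def sum.distrib distrib_left)

lemma alternation_diff: "alternation n (\<lambda>u. F u - G u) v = alternation n F v - alternation n G v"
  by (simp add: alternation_def sum_subtractf right_diff_distrib)

lemma alternation_mult: "alternation n (\<lambda>u. r * F u) v = r * alternation n F v"
  by (simp add: alternation_def sum_distrib_left algebra_simps)

lemma alternation_divide: "alternation n (\<lambda>u. F u / r) v = alternation n F v / r"
  by (simp add: alternation_def sum_divide_distrib)

lemma alternation_sum:
  "alternation n (\<lambda>u. \<Sum>m\<in>I. F m u) v = (\<Sum>m\<in>I. alternation n (F m) v)"
  unfolding alternation_def sum_distrib_left by (rule sum.swap)

lemma alternation_eq_0_if_transpose_invariant: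
  assumes "a < n" "b < n" "a \<noteq> b"
    and invariant: "\<And>u. F (u \<circ> Transposition.transpose a b) = F u"
  shows "alternation n F v = 0"
proof -
  let ?P = "{\<rho>. \<rho> permutes {..<n}}" and ?t = "Transposition.transpose a b"
  have t: "?t permutes {..<n}"
    using assms by (intro permutes_swap_id) auto
  have sign_t: "sign (\<rho> \<circ> ?t) = - sign \<rho>" if "\<rho> \<in> ?P" for \<rho>
  proof -
    have "permutation \<rho>"
      using that by (auto simp: permutation_permutes)
    then show ?thesis
      using assms by (simp add: sign_compose permutation_swap_id sign_swap_id)
  qed
  have "alternation n F v = (\<Sum>\<rho>\<in>?P. of_int (sign (\<rho> \<circ> ?t)) * F (v \<circ> (\<rho> \<circ> ?t)))"
    unfolding alternation_def by (rule sum_permutations_compose_right[OF t])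
  also have "\<dots> = - alternation n F v"
    unfolding alternation_def sum_negf[symmetric]
    using invariant by (intro sum.cong refl) (simp add: sign_t comp_assoc[symmetric])
  finally show ?thesis by simp
qed

lemma has_derivative_alternation:
  assumes "\<And>u. ((\<lambda>t. F t u) has_derivative F' u) (at t0)"
  shows "((\<lambda>t. alternation n (F t) v) has_derivative (\<lambda>s. alternation n (\<lambda>u. F' u s) v)) (at t0)"
  unfolding alternation_def by (intro has_derivative_sum has_derivative_mult_right assms)

definition shift_perm :: "nat \<Rightarrow> (nat \<Rightarrow> nat) \<Rightarrow> nat \<Rightarrow> nat" where
  "shift_perm p \<tau> j = (if j < p then j else p + \<tau> (j - p))"

lemma shift_perm_transpose:
  "shift_perm p (Transposition.transpose a b \<circ> \<tau>) = Transposition.transpose (p+a) (p+b) \<circ> shift_perm p \<tau>"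
  by (auto simp: shift_perm_def Transposition.transpose_def fun_eq_iff)

lemma shift_perm_permutes:
  assumes "\<tau> permutes {..<q}"
  shows "shift_perm p \<tau> permutes {..<p+q} \<and> sign (shift_perm p \<tau>) = sign \<tau>"
  using assms finite_lessThan
proof (induction rule: permutes_induct)
  case id
  have "shift_perm p (\<lambda>a. a) = (\<lambda>a. a)"
    by (auto simp: shift_perm_def fun_eq_iff)
  then show ?case
    using permutes_id sign_id by (simp add: id_def)
next
  case (swap a b \<tau>)
  have perms: "permutation (shift_perm p \<tau>)" "permutation \<tau>"
    using swap by (auto intro: permutes_imp_permutation)
  have "Transposition.transpose (p+a) (p+b) \<circ> shift_perm p \<tau> permutes {..<p+q}"
    using swap by (intro permutes_compose permutes_swap_id) auto
  moreover have "sign (Transposition.transpose (p+a) (p+b) \<circ> shift_perm p \<tau>) = sign (Transposition.transpose a b \<circ> \<tau>)"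
    using swap perms by (simp add: sign_compose permutation_swap_id sign_swap_id)
  ultimately show ?case
    unfolding shift_perm_transpose by blast
qed

text \<open>Each of the \<open>q!\<close> reorderings of the last \<open>q\<close> arguments contributes the same term, which
  cancels the \<open>q!\<close> in the normalisation of \<^const>\<open>wedge\<close>.\<close>

lemma wedge_alternation:
  assumes \<alpha>: "\<And>u u'. (\<And>i. i < p \<Longrightarrow> u i = u' i) \<Longrightarrow> \<alpha> u = \<alpha> u'"
  shows "wedge p q \<alpha> (alternation q g) v = alternation (p+q) (\<lambda>u. \<alpha> u * g (\<lambda>i. u (p+i))) v / fact p"
proof -
  let ?P = "{\<sigma>. \<sigma> permutes {..<p+q}}" and ?Q = "{\<tau>. \<tau> permutes {..<q}}"
  define G where "G \<rho> = of_int (sign \<rho>) * (\<alpha> (v \<circ> \<rho>) * g (\<lambda>i. v (\<rho> (p+i))))" for \<rho>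
  have summand: "of_int (sign \<sigma>) * \<alpha> (v \<circ> \<sigma>) * (of_int (sign \<tau>) * g ((\<lambda>i. v (\<sigma> (p+i))) \<circ> \<tau>))
      = G (\<sigma> \<circ> shift_perm p \<tau>)" if "\<sigma> \<in> ?P" "\<tau> \<in> ?Q" for \<sigma> \<tau>
  proof -
    have shift: "shift_perm p \<tau> permutes {..<p+q}" "sign (shift_perm p \<tau>) = sign \<tau>"
      using shift_perm_permutes that(2) by auto
    have "sign (\<sigma> \<circ> shift_perm p \<tau>) = sign \<sigma> * sign \<tau>"
    proof -
      have "permutation \<sigma>" "permutation (shift_perm p \<tau>)"
        using that(1) shift(1) by (auto intro: permutes_imp_permutation)
      then show ?thesis
        using shift(2) by (simp add: sign_compose)
    qed
    moreover have "\<alpha> (v \<circ> (\<sigma> \<circ> shift_perm p \<tau>)) = \<alpha> (v \<circ> \<sigma>)"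
      by (rule \<alpha>) (simp add: shift_perm_def)
    moreover have "(\<lambda>i. v ((\<sigma> \<circ> shift_perm p \<tau>) (p+i))) = (\<lambda>i. v (\<sigma> (p+i))) \<circ> \<tau>"
      by (simp add: shift_perm_def fun_eq_iff)
    ultimately show ?thesis
      unfolding G_def by (simp add: mult_ac)
  qed
  have "wedge p q \<alpha> (alternation q g) v = (\<Sum>\<sigma>\<in>?P. \<Sum>\<tau>\<in>?Q. G (\<sigma> \<circ> shift_perm p \<tau>)) / (fact p * fact q)"
    unfolding wedge_def alternation_def sum_distrib_left
    by (intro arg_cong[where f = "\<lambda>x. x / _"] sum.cong refl summand) auto
  also have "(\<Sum>\<sigma>\<in>?P. \<Sum>\<tau>\<in>?Q. G (\<sigma> \<circ> shift_perm p \<tau>)) = (\<Sum>\<tau>\<in>?Q. \<Sum>\<sigma>\<in>?P. G (\<sigma> \<circ> shift_perm p \<tau>))"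
    by (rule sum.swap)
  also have "\<dots> = (\<Sum>\<tau>\<in>?Q. \<Sum>\<sigma>\<in>?P. G \<sigma>)"
  proof (rule sum.cong[OF refl])
    fix \<tau> assume "\<tau> \<in> ?Q"
    then have "shift_perm p \<tau> permutes {..<p+q}"
      using shift_perm_permutes by blast
    then show "(\<Sum>\<sigma>\<in>?P. G (\<sigma> \<circ> shift_perm p \<tau>)) = (\<Sum>\<sigma>\<in>?P. G \<sigma>)"
      by (rule sum_permutations_compose_right[symmetric])
  qed
  also have "\<dots> = fact q * alternation (p+q) (\<lambda>u. \<alpha> u * g (\<lambda>i. u (p+i))) v"
    by (simp add: card_permutations G_def alternation_def)
  finally show ?thesis by simp
qed

lemma wpow2_alternation:
  "wpow2 (\<lambda>u. b (u 0) (u 1)) m v = alternation (2*m) (\<lambda>u. \<Prod>i<m. b (u (2*i)) (u (2*i+1))) v / 2^m"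
proof (induction m arbitrary: v)
  case 0
  show ?case by (simp add: alternation_def permutes_empty)
next
  case (Suc m)
  have "wpow2 (\<lambda>u. b (u 0) (u 1)) m = alternation (2*m) (\<lambda>u. (\<Prod>i<m. b (u (2*i)) (u (2*i+1))) / 2^m)"
    by (rule ext) (simp only: Suc.IH alternation_divide)
  moreover have "b (u 0) (u 1) * ((\<Prod>i<m. b (u (2+2*i)) (u (2+(2*i+1)))) / 2^m) / fact 2
      = (\<Prod>i<Suc m. b (u (2*i)) (u (2*i+1))) / 2 ^ Suc m" for u :: "nat \<Rightarrow> 'a"
    by (subst prod.lessThan_Suc_shift) (simp add: mult_ac)
  ultimately show ?case
    by (simp add: wedge_alternation alternation_divide[symmetric])
qed

text \<open>\<open>wedge_prod w c k\<close> is \<open>2^k\<close> times \<open>w \<and> c 0 \<and> \<dots> \<and> c (k-1)\<close>; slots are kept separate so that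
  a single one can be replaced.\<close>

definition wedge_prod :: "('v \<Rightarrow> complex) \<Rightarrow> (nat \<Rightarrow> 'v \<Rightarrow> 'v \<Rightarrow> complex) \<Rightarrow> nat \<Rightarrow> (nat \<Rightarrow> 'v) \<Rightarrow> complex" where
  "wedge_prod w c k = alternation (2*k+1) (\<lambda>u. w (u 0) * (\<Prod>i<k. c i (u (2*i+1)) (u (2*i+2))))"

definition dform_bilin :: "(complex^'n \<Rightarrow> complex^'n) \<Rightarrow> complex^'n \<Rightarrow> complex^'n \<Rightarrow> complex^'n \<Rightarrow> complex" where
  "dform_bilin a x z z' = cpair (frechet_derivative a (at x) z) z' - cpair (frechet_derivative a (at x) z') z"

lemma contact_top_eq_wedge_prod:
  "contact_top k a x v = wedge_prod (cpair (a x)) (\<lambda>_. dform_bilin a x) k v / 2^k"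
proof -
  have "wpow2 (dform1 a x) k = alternation (2*k) (\<lambda>u. (\<Prod>i<k. dform_bilin a x (u (2*i)) (u (2*i+1))) / 2^k)"
    using wpow2_alternation[of "dform_bilin a x"]
    by (simp add: fun_eq_iff dform1_def dform_bilin_def alternation_divide)
  then show ?thesis
    unfolding contact_top_def form1_def wedge_prod_def
    by (simp add: wedge_alternation alternation_divide add.commute)
qed

lemma wedge_prod_cong: "(\<And>i. i < k \<Longrightarrow> c i = c' i) \<Longrightarrow> wedge_prod w c k = wedge_prod w c' k"
  unfolding wedge_prod_def by (metis (no_types, lifting) lessThan_iff prod.cong)

lemma wedge_prod_update:
  assumes "j < k"
  shows "wedge_prod w (c(j := d)) k = alternation (2*k+1) (\<lambda>u. w (u 0) * d (u (2*j+1)) (u (2*j+2)) *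
           (\<Prod>i\<in>{..<k}-{j}. c i (u (2*i+1)) (u (2*i+2))))"
proof -
  have "(\<Prod>i<k. (c(j := d)) i (u (2*i+1)) (u (2*i+2)))
      = d (u (2*j+1)) (u (2*j+2)) * (\<Prod>i\<in>{..<k}-{j}. c i (u (2*i+1)) (u (2*i+2)))" for u :: "nat \<Rightarrow> 'a"
    using assms by (simp add: prod.remove[of "{..<k}" j])
  then show ?thesis
    unfolding wedge_prod_def by (simp add: mult.assoc)
qed

lemma wedge_prod_update_linear:
  assumes "j < k"
  shows "wedge_prod w (c(j := \<lambda>x y. r * d x y + s * e x y)) k v
       = r * wedge_prod w (c(j := d)) k v + s * wedge_prod w (c(j := e)) k v"
  unfolding wedge_prod_update[OF assms] alternation_mult[symmetric] alternation_add[symmetric]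
  by (simp add: algebra_simps)

lemma wedge_prod_form_linear:
  "wedge_prod (\<lambda>z. r * w1 z + s * w2 z) c k v = r * wedge_prod w1 c k v + s * wedge_prod w2 c k v"
  unfolding wedge_prod_def alternation_mult[symmetric] alternation_add[symmetric]
  by (simp add: algebra_simps)

lemma wedge_prod_scale:
  "wedge_prod (\<lambda>z. f * w z) (\<lambda>_ z z'. f' * b z z') k v = f * f'^k * wedge_prod w (\<lambda>_. b) k v"
  unfolding wedge_prod_def alternation_mult[symmetric]
  by (simp add: prod.distrib algebra_simps)

lemma wedge_prod_compose:
  "wedge_prod (\<lambda>z. w (G z)) (\<lambda>i z z'. c i (G z) (G z')) k v = wedge_prod w c k (\<lambda>i. G (v i))"
  by (simp add: wedge_prod_def alternation_def)

text \<open>A slot of the form \<open>g \<otimes> w\<close> or \<open>w \<otimes> g\<close> repeats the 1-form \<open>w\<close>, so a transposition of arguments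
  fixes the summand.\<close>

lemma wedge_prod_update_vanishes_right:
  assumes "j < k"
  shows "wedge_prod w (c(j := \<lambda>x y. g x * w y)) k v = 0"
  unfolding wedge_prod_update[OF assms]
proof (rule alternation_eq_0_if_transpose_invariant[of 0 _ "2*j+2"])
  fix u :: "nat \<Rightarrow> 'a"
  let ?t = "Transposition.transpose 0 (2*j+2)"
  have "(\<Prod>i\<in>{..<k}-{j}. c i ((u \<circ> ?t) (2*i+1)) ((u \<circ> ?t) (2*i+2)))
      = (\<Prod>i\<in>{..<k}-{j}. c i (u (2*i+1)) (u (2*i+2)))"
    by (intro prod.cong refl) (auto simp: Transposition.transpose_def)
  then show "w ((u \<circ> ?t) 0) * (g ((u \<circ> ?t) (2*j+1)) * w ((u \<circ> ?t) (2*j+2))) *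
      (\<Prod>i\<in>{..<k}-{j}. c i ((u \<circ> ?t) (2*i+1)) ((u \<circ> ?t) (2*i+2)))
    = w (u 0) * (g (u (2*j+1)) * w (u (2*j+2))) * (\<Prod>i\<in>{..<k}-{j}. c i (u (2*i+1)) (u (2*i+2)))"
    by (simp add: Transposition.transpose_def)
qed (use assms in auto)

lemma wedge_prod_update_vanishes_left:
  assumes "j < k"
  shows "wedge_prod w (c(j := \<lambda>x y. w x * g y)) k v = 0"
  unfolding wedge_prod_update[OF assms]
proof (rule alternation_eq_0_if_transpose_invariant[of 0 _ "2*j+1"])
  fix u :: "nat \<Rightarrow> 'a"
  let ?t = "Transposition.transpose 0 (2*j+1)"
  have "(\<Prod>i\<in>{..<k}-{j}. c i ((u \<circ> ?t) (2*i+1)) ((u \<circ> ?t) (2*i+2)))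
      = (\<Prod>i\<in>{..<k}-{j}. c i (u (2*i+1)) (u (2*i+2)))"
    by (intro prod.cong refl) (auto simp: Transposition.transpose_def)
  then show "w ((u \<circ> ?t) 0) * (w ((u \<circ> ?t) (2*j+1)) * g ((u \<circ> ?t) (2*j+2))) *
      (\<Prod>i\<in>{..<k}-{j}. c i ((u \<circ> ?t) (2*i+1)) ((u \<circ> ?t) (2*i+2)))
    = w (u 0) * (w (u (2*j+1)) * g (u (2*j+2))) * (\<Prod>i\<in>{..<k}-{j}. c i (u (2*i+1)) (u (2*i+2)))"
    by (simp add: Transposition.transpose_def)
qed (use assms in auto)

lemma wedge_prod_update_absorb:
  assumes "j < k"
  shows "wedge_prod w (c(j := \<lambda>x y. d x y + (g x * w y - g y * w x))) k v = wedge_prod w (c(j := d)) k v"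
proof -
  have "wedge_prod w (c(j := \<lambda>x y. d x y + (g x * w y - g y * w x))) k v
      = wedge_prod w (c(j := d)) k v + wedge_prod w (c(j := \<lambda>x y. g x * w y)) k v
        - wedge_prod w (c(j := \<lambda>x y. w x * g y)) k v"
    unfolding wedge_prod_update[OF assms] alternation_add[symmetric] alternation_diff[symmetric]
    by (simp add: algebra_simps)
  then show ?thesis
    using wedge_prod_update_vanishes_left[OF assms, of w c g v]
      wedge_prod_update_vanishes_right[OF assms, of w c g v] by simp
qed

lemma wedge_prod_absorb:
  "wedge_prod w (\<lambda>_ x y. d x y + (g x * w y - g y * w x)) k v = wedge_prod w (\<lambda>_. d) k v"
proof -
  define c where "c (m::nat) (i::nat) = (if i < m then (\<lambda>x y. d x y + (g x * w y - g y * w x)) else d)" for m i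
  have "m \<le> k \<Longrightarrow> wedge_prod w (c m) k v = wedge_prod w (\<lambda>_. d) k v" for m
  proof (induction m)
    case 0
    then show ?case by (simp add: c_def)
  next
    case (Suc m)
    then have "m < k" by simp
    have "c (Suc m) = (c m)(m := \<lambda>x y. d x y + (g x * w y - g y * w x))"
      by (auto simp: c_def fun_eq_iff)
    then have "wedge_prod w (c (Suc m)) k v = wedge_prod w ((c m)(m := d)) k v"
      using wedge_prod_update_absorb[OF \<open>m < k\<close>] by simp
    also have "(c m)(m := d) = c m"
      by (auto simp: c_def fun_eq_iff)
    finally show ?case
      using Suc by simp
  qed
  moreover have "wedge_prod w (c k) k = wedge_prod w (\<lambda>_ x y. d x y + (g x * w y - g y * w x)) k"
    by (rule wedge_prod_cong) (simp add: c_def)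
  ultimately show ?thesis by (metis order_refl)
qed

lemma wedge_prod_conformal:
  "wedge_prod (\<lambda>z. f * w z) (\<lambda>_ z z'. f * b z z' + (g z * w z' - g z' * w z)) k v
     = f ^ Suc k * wedge_prod w (\<lambda>_. b) k v"
proof -
  have "wedge_prod (\<lambda>z. f * w z) (\<lambda>_ z z'. f * b z z' + (g z * w z' - g z' * w z)) k v
      = f * wedge_prod w (\<lambda>_ z z'. f * b z z') k v"
    using wedge_prod_form_linear[of f w 0] wedge_prod_absorb[of w "\<lambda>z z'. f * b z z'" g k v] by simp
  then show ?thesis
    using wedge_prod_scale[of 1 w f b] by simp
qed

lemma has_derivative_wedge_prod:
  assumes "\<And>z. ((\<lambda>t. W t z) has_derivative W' z) (at t0)"
    and "\<And>z z'. ((\<lambda>t. B t z z') has_derivative B' z z') (at t0)"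
  shows "((\<lambda>t. wedge_prod (W t) (\<lambda>_. B t) k v) has_derivative
     (\<lambda>s. wedge_prod (\<lambda>z. W' z s) (\<lambda>_. B t0) k v
          + (\<Sum>m<k. wedge_prod (W t0) ((\<lambda>_. B t0)(m := \<lambda>z z'. B' z z' s)) k v))) (at t0)"
proof -
  let ?R = "\<lambda>u m. \<Prod>i\<in>{..<k}-{m}. B t0 (u (2*i+1)) (u (2*i+2))"
  have "((\<lambda>t. W t (u 0) * (\<Prod>i<k. B t (u (2*i+1)) (u (2*i+2)))) has_derivative
      (\<lambda>s. W t0 (u 0) * (\<Sum>m<k. B' (u (2*m+1)) (u (2*m+2)) s * ?R u m)
           + W' (u 0) s * (\<Prod>i<k. B t0 (u (2*i+1)) (u (2*i+2))))) (at t0)" for u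
    by (intro has_derivative_mult has_derivative_prod assms)
  then have "((\<lambda>t. wedge_prod (W t) (\<lambda>_. B t) k v) has_derivative
      (\<lambda>s. alternation (2*k+1) (\<lambda>u. W t0 (u 0) * (\<Sum>m<k. B' (u (2*m+1)) (u (2*m+2)) s * ?R u m)
           + W' (u 0) s * (\<Prod>i<k. B t0 (u (2*i+1)) (u (2*i+2)))) v)) (at t0)"
    unfolding wedge_prod_def by (rule has_derivative_alternation)
  moreover have "alternation (2*k+1) (\<lambda>u. W t0 (u 0) * (\<Sum>m<k. B' (u (2*m+1)) (u (2*m+2)) s * ?R u m)
           + W' (u 0) s * (\<Prod>i<k. B t0 (u (2*i+1)) (u (2*i+2)))) v
      = wedge_prod (\<lambda>z. W' z s) (\<lambda>_. B t0) k v
          + (\<Sum>m<k. wedge_prod (W t0) ((\<lambda>_. B t0)(m := \<lambda>z z'. B' z z' s)) k v)" for s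
    unfolding alternation_add wedge_prod_def[of "\<lambda>z. W' z s"]
    by (simp add: wedge_prod_update sum_distrib_left alternation_sum mult.assoc mult.left_commute)
  ultimately show ?thesis by simp
qed

text \<open>Differentiating \<open>wedge_prod (w \<circ> (id + \<epsilon> K)) (b \<circ> (id + \<epsilon> K)) = 0\<close> at \<open>\<epsilon> = 0\<close>: the
  derivation induced by a linear map \<open>K\<close> kills a vanishing top form.\<close>

lemma wedge_prod_derivation_vanishes:
  fixes w :: "complex^'n \<Rightarrow> complex" and b :: "complex^'n \<Rightarrow> complex^'n \<Rightarrow> complex"
  assumes w: "\<And>z z' c. w (z + c *s z') = w z + c * w z'"
    and b1: "\<And>z z' y c. b (z + c *s z') y = b z y + c * b z' y"
    and b2: "\<And>z y y' c. b z (y + c *s y') = b z y + c * b z y'"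
    and vanishes: "\<And>v. wedge_prod w (\<lambda>_. b) k v = 0"
  shows "wedge_prod (\<lambda>z. w (K z)) (\<lambda>_. b) k v
       + (\<Sum>m<k. wedge_prod w ((\<lambda>_. b)(m := \<lambda>z z'. b (K z) z' + b z (K z'))) k v) = 0"
proof -
  define W where "W \<epsilon> = (\<lambda>z. w (z + \<epsilon> *s K z))" for \<epsilon> :: complex
  define B where "B \<epsilon> = (\<lambda>z z'. b (z + \<epsilon> *s K z) (z' + \<epsilon> *s K z'))" for \<epsilon> :: complex
  have "(\<lambda>\<epsilon>. W \<epsilon> z) = (\<lambda>\<epsilon>. w z + \<epsilon> * w (K z))" for z
    by (simp add: W_def w fun_eq_iff)
  then have dW: "((\<lambda>\<epsilon>. W \<epsilon> z) has_derivative (\<lambda>s. s * w (K z))) (at 0)" for z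
    by (auto intro!: derivative_eq_intros)
  have "(\<lambda>\<epsilon>. B \<epsilon> z z') = (\<lambda>\<epsilon>. b z z' + \<epsilon> * (b (K z) z' + b z (K z')) + \<epsilon> * \<epsilon> * b (K z) (K z'))" for z z'
    by (simp add: B_def b1 b2 algebra_simps fun_eq_iff)
  then have dB: "((\<lambda>\<epsilon>. B \<epsilon> z z') has_derivative (\<lambda>s. s * (b (K z) z' + b z (K z')))) (at 0)" for z z'
    by (auto intro!: derivative_eq_intros)
  have "W 0 = w" "B 0 = b"
    by (auto simp: W_def B_def fun_eq_iff)
  then have D: "((\<lambda>\<epsilon>. wedge_prod (W \<epsilon>) (\<lambda>_. B \<epsilon>) k v) has_derivative
     (\<lambda>s. wedge_prod (\<lambda>z. s * w (K z)) (\<lambda>_. b) k v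
        + (\<Sum>m<k. wedge_prod w ((\<lambda>_. b)(m := \<lambda>z z'. s * (b (K z) z' + b z (K z')))) k v))) (at 0)"
    using has_derivative_wedge_prod[OF dW dB] by simp
  have "wedge_prod (W \<epsilon>) (\<lambda>_. B \<epsilon>) k v = 0" for \<epsilon>
    unfolding W_def B_def wedge_prod_compose[of w "\<lambda>z. z + \<epsilon> *s K z" "\<lambda>_. b"] by (rule vanishes)
  then have "((\<lambda>\<epsilon>. wedge_prod (W \<epsilon>) (\<lambda>_. B \<epsilon>) k v) has_derivative (\<lambda>s. 0)) (at 0)"
    by simp
  from fun_cong[OF has_derivative_unique[OF D this], of 1] show ?thesis
    by simp
qed

text \<open>The Lie derivative of \<open>\<omega> \<and> (d\<omega>)^k\<close> along a vector field with \<open>L\<^sub>X \<omega> = h \<omega>\<close>, evaluated at a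
  point where \<open>\<omega> \<and> (d\<omega>)^k\<close> vanishes: \<open>w'\<close> and \<open>b'\<close> are the derivatives of \<open>\<omega>\<close> and \<open>d\<omega>\<close> along the
  field, \<open>K\<close> its Jacobian and \<open>g = dh\<close>.\<close>

lemma wedge_prod_lie_derivative_vanishes:
  fixes w :: "complex^'n \<Rightarrow> complex" and b :: "complex^'n \<Rightarrow> complex^'n \<Rightarrow> complex"
  assumes w: "\<And>z z' c. w (z + c *s z') = w z + c * w z'"
    and b1: "\<And>z z' y c. b (z + c *s z') y = b z y + c * b z' y"
    and b2: "\<And>z y y' c. b z (y + c *s y') = b z y + c * b z y'"
    and vanishes: "\<And>v. wedge_prod w (\<lambda>_. b) k v = 0"
    and w': "\<And>z. w' z = h * w z - w (K z)"
    and b': "\<And>z z'. b' z z' = h * b z z' - (b (K z) z' + b z (K z')) + (g z * w z' - g z' * w z)"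
  shows "wedge_prod w' (\<lambda>_. b) k v + (\<Sum>m<k. wedge_prod w ((\<lambda>_. b)(m := b')) k v) = 0"
proof -
  let ?bK = "\<lambda>z z'. b (K z) z' + b z (K z')"
  have "w' = (\<lambda>z. h * w z + (-1) * w (K z))"
    by (simp add: w' fun_eq_iff)
  then have form: "wedge_prod w' (\<lambda>_. b) k v = - wedge_prod (\<lambda>z. w (K z)) (\<lambda>_. b) k v"
    using wedge_prod_form_linear[of h w "-1" "\<lambda>z. w (K z)"] vanishes by simp
  have slot: "wedge_prod w ((\<lambda>_. b)(m := b')) k v = - wedge_prod w ((\<lambda>_. b)(m := ?bK)) k v"
    if "m < k" for m
  proof -
    have "b' = (\<lambda>z z'. h * b z z' + (-1) * ?bK z z' + (g z * w z' - g z' * w z))"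
      by (simp add: b' fun_eq_iff)
    then have "wedge_prod w ((\<lambda>_. b)(m := b')) k v
        = wedge_prod w ((\<lambda>_. b)(m := \<lambda>z z'. h * b z z' + (-1) * ?bK z z')) k v"
      using wedge_prod_update_absorb[OF that] by simp
    also have "\<dots> = h * wedge_prod w ((\<lambda>_. b)(m := b)) k v + (-1) * wedge_prod w ((\<lambda>_. b)(m := ?bK)) k v"
      by (rule wedge_prod_update_linear[OF that])
    also have "(\<lambda>_. b)(m := b) = (\<lambda>_. b)"
      by (rule fun_upd_idem) simp
    finally show ?thesis
      using vanishes[of v] by (simp only: mult_zero_right add_0 mult_minus1)
  qed
  have "wedge_prod w' (\<lambda>_. b) k v + (\<Sum>m<k. wedge_prod w ((\<lambda>_. b)(m := b')) k v)
      = - (wedge_prod (\<lambda>z. w (K z)) (\<lambda>_. b) k v + (\<Sum>m<k. wedge_prod w ((\<lambda>_. b)(m := ?bK)) k v))"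
    by (simp add: form slot sum_negf)
  also have "\<dots> = 0"
    using wedge_prod_derivation_vanishes[OF w b1 b2 vanishes, of K v] by simp
  finally show ?thesis .
qed

section \<open>Symmetry of second derivatives\<close>

lemma second_difference_bound:
  fixes g :: "'a::real_normed_vector \<Rightarrow> 'b::real_inner"
  assumes t: "t > 0"
    and dg: "\<And>y. y \<in> S \<Longrightarrow> (g has_derivative Dg y) (at y)"
    and segments: "\<And>\<sigma>. 0 \<le> \<sigma> \<Longrightarrow> \<sigma> \<le> t \<Longrightarrow> x + \<sigma> *\<^sub>R s + t *\<^sub>R u \<in> S \<and> x + \<sigma> *\<^sub>R s \<in> S"
    and bound: "\<And>\<sigma>. 0 \<le> \<sigma> \<Longrightarrow> \<sigma> \<le> t \<Longrightarrow>
      norm (Dg (x + \<sigma> *\<^sub>R s + t *\<^sub>R u) s - Dg (x + \<sigma> *\<^sub>R s) s - t *\<^sub>R L) \<le> M"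
  shows "norm (g (x + t *\<^sub>R s + t *\<^sub>R u) - g (x + t *\<^sub>R s) - g (x + t *\<^sub>R u) + g x - t\<^sup>2 *\<^sub>R L) \<le> t * M"
proof -
  define \<psi> where "\<psi> \<sigma> = g (x + \<sigma> *\<^sub>R s + t *\<^sub>R u) - g (x + \<sigma> *\<^sub>R s) - (\<sigma> * t) *\<^sub>R L" for \<sigma>
  define \<psi>' where "\<psi>' \<sigma> h = h *\<^sub>R (Dg (x + \<sigma> *\<^sub>R s + t *\<^sub>R u) s - Dg (x + \<sigma> *\<^sub>R s) s - t *\<^sub>R L)" for \<sigma> h
  have deriv: "(\<psi> has_derivative \<psi>' \<sigma>) (at \<sigma>)" if "0 \<le> \<sigma>" "\<sigma> \<le> t" for \<sigma>
  proof -
    have dg1: "(g has_derivative Dg (x + \<sigma> *\<^sub>R s + t *\<^sub>R u)) (at (x + \<sigma> *\<^sub>R s + t *\<^sub>R u))"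
      and dg2: "(g has_derivative Dg (x + \<sigma> *\<^sub>R s)) (at (x + \<sigma> *\<^sub>R s))"
      using dg segments[OF that] by auto
    have "((\<lambda>\<sigma>. x + \<sigma> *\<^sub>R s + t *\<^sub>R u) has_derivative (\<lambda>h. h *\<^sub>R s)) (at \<sigma>)"
      and "((\<lambda>\<sigma>. x + \<sigma> *\<^sub>R s) has_derivative (\<lambda>h. h *\<^sub>R s)) (at \<sigma>)"
      by (auto intro!: derivative_eq_intros)
    from has_derivative_compose[OF this(1) dg1] has_derivative_compose[OF this(2) dg2]
    have "(\<psi> has_derivative (\<lambda>h. Dg (x + \<sigma> *\<^sub>R s + t *\<^sub>R u) (h *\<^sub>R s) - Dg (x + \<sigma> *\<^sub>R s) (h *\<^sub>R s)
        - (h * t) *\<^sub>R L)) (at \<sigma>)"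
      unfolding \<psi>_def o_def by (auto intro!: derivative_eq_intros)
    moreover have "linear (Dg (x + \<sigma> *\<^sub>R s + t *\<^sub>R u))" "linear (Dg (x + \<sigma> *\<^sub>R s))"
      using dg1 dg2 by (auto dest: has_derivative_linear)
    ultimately show ?thesis
      unfolding \<psi>'_def by (simp add: linear_scale scaleR_diff_right)
  qed
  have "continuous_on {0..t} \<psi>"
    by (intro continuous_at_imp_continuous_on) (metis atLeastAtMost_iff deriv has_derivative_continuous)
  then obtain \<xi> where \<xi>: "\<xi> \<in> {0<..<t}" and mvt: "norm (\<psi> t - \<psi> 0) \<le> norm (\<psi>' \<xi> (t - 0))"
    using mvt_general[OF t, of \<psi> \<psi>'] deriv by auto
  have "norm (\<psi>' \<xi> (t - 0)) \<le> t * M"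
    using bound[of \<xi>] \<xi> t by (simp add: \<psi>'_def mult_left_mono)
  moreover have "\<psi> t - \<psi> 0 = g (x + t *\<^sub>R s + t *\<^sub>R u) - g (x + t *\<^sub>R s) - g (x + t *\<^sub>R u) + g x - t\<^sup>2 *\<^sub>R L"
    by (simp add: \<psi>_def power2_eq_square)
  ultimately show ?thesis
    using mvt by simp
qed

lemma second_difference_estimate:
  fixes g :: "'a::real_normed_vector \<Rightarrow> 'b::real_inner"
  assumes t: "t > 0" and C: "norm s + norm u \<le> C" "t * C < r" and "linear D2"
    and dg: "\<And>y. y \<in> ball x r \<Longrightarrow> (g has_derivative Dg y) (at y)"
    and close: "\<And>v. norm v \<le> t * C \<Longrightarrow> norm (Dg (x + v) s - Dg x s - D2 v) \<le> e"
  shows "norm (g (x + t *\<^sub>R s + t *\<^sub>R u) - g (x + t *\<^sub>R s) - g (x + t *\<^sub>R u) + g x - t\<^sup>2 *\<^sub>R D2 u) \<le> t * (2 * e)"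
proof (rule second_difference_bound[OF t dg])
  fix \<sigma> assume \<sigma>: "0 \<le> \<sigma>" "\<sigma> \<le> t"
  have near: "norm (\<sigma> *\<^sub>R s + \<tau> *\<^sub>R u) \<le> t * C" if "0 \<le> \<tau>" "\<tau> \<le> t" for \<tau>
  proof -
    have "norm (\<sigma> *\<^sub>R s + \<tau> *\<^sub>R u) \<le> \<sigma> * norm s + \<tau> * norm u"
      using norm_triangle_ineq[of "\<sigma> *\<^sub>R s" "\<tau> *\<^sub>R u"] that \<sigma> by simp
    also have "\<dots> \<le> t * (norm s + norm u)"
      using that \<sigma> by (simp add: distrib_left add_mono mult_right_mono)
    also have "\<dots> \<le> t * C"
      using C t by simp
    finally show ?thesis .
  qed
  then have n1: "norm (\<sigma> *\<^sub>R s + t *\<^sub>R u) \<le> t * C" and n2: "norm (\<sigma> *\<^sub>R s) \<le> t * C"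
    using near[of t] near[of 0] t by auto
  have "dist x (x + v) = norm v" for v
    by (simp add: dist_norm)
  then show "x + \<sigma> *\<^sub>R s + t *\<^sub>R u \<in> ball x r \<and> x + \<sigma> *\<^sub>R s \<in> ball x r"
    using C n1 n2 by (simp add: add.assoc)
  have "Dg (x + \<sigma> *\<^sub>R s + t *\<^sub>R u) s - Dg (x + \<sigma> *\<^sub>R s) s - t *\<^sub>R D2 u
      = (Dg (x + (\<sigma> *\<^sub>R s + t *\<^sub>R u)) s - Dg x s - D2 (\<sigma> *\<^sub>R s + t *\<^sub>R u))
        - (Dg (x + \<sigma> *\<^sub>R s) s - Dg x s - D2 (\<sigma> *\<^sub>R s))"
    using \<open>linear D2\<close> by (simp add: linear_add linear_scale add.assoc)
  then have "norm (Dg (x + \<sigma> *\<^sub>R s + t *\<^sub>R u) s - Dg (x + \<sigma> *\<^sub>R s) s - t *\<^sub>R D2 u)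
      \<le> norm (Dg (x + (\<sigma> *\<^sub>R s + t *\<^sub>R u)) s - Dg x s - D2 (\<sigma> *\<^sub>R s + t *\<^sub>R u))
        + norm (Dg (x + \<sigma> *\<^sub>R s) s - Dg x s - D2 (\<sigma> *\<^sub>R s))"
    by (simp only: norm_triangle_ineq4)
  also have "\<dots> \<le> 2 * e"
    using close[OF n1] close[OF n2] by simp
  finally show "norm (Dg (x + \<sigma> *\<^sub>R s + t *\<^sub>R u) s - Dg (x + \<sigma> *\<^sub>R s) s - t *\<^sub>R D2 u) \<le> 2 * e" .
qed

lemma second_difference_asymptotics:
  fixes g :: "'a::real_normed_vector \<Rightarrow> 'b::real_inner"
  assumes r: "r > 0" and dg: "\<And>y. y \<in> ball x r \<Longrightarrow> (g has_derivative Dg y) (at y)"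
    and d2: "((\<lambda>y. Dg y s) has_derivative D2) (at x)" and \<epsilon>: "\<epsilon> > 0"
  shows "\<forall>\<^sub>F t in at_right 0.
    norm (g (x + t *\<^sub>R s + t *\<^sub>R u) - g (x + t *\<^sub>R s) - g (x + t *\<^sub>R u) + g x - t\<^sup>2 *\<^sub>R D2 u) \<le> \<epsilon> * t\<^sup>2"
proof -
  define C where "C = norm s + norm u + 1"
  have C: "C > 0" "norm s + norm u \<le> C"
    by (auto simp: C_def add_nonneg_pos)
  have "\<epsilon> / (2*C) > 0"
    using \<epsilon> C by simp
  then obtain d where d: "d > 0"
    and close: "\<And>y. norm (y - x) < d \<Longrightarrow> norm (Dg y s - Dg x s - D2 (y - x)) \<le> \<epsilon> / (2*C) * norm (y - x)"
    using d2 unfolding has_derivative_at_alt by blast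
  have "norm (g (x + t *\<^sub>R s + t *\<^sub>R u) - g (x + t *\<^sub>R s) - g (x + t *\<^sub>R u) + g x - t\<^sup>2 *\<^sub>R D2 u)
      \<le> t * (2 * (\<epsilon> / (2*C) * (t * C)))" if t: "0 < t" "t * C < min r d" for t
  proof (rule second_difference_estimate[OF t(1) C(2) _ has_derivative_linear[OF d2] dg])
    show "norm (Dg (x + v) s - Dg x s - D2 v) \<le> \<epsilon> / (2*C) * (t * C)" if "norm v \<le> t * C" for v
    proof -
      have "norm (Dg (x + v) s - Dg x s - D2 v) \<le> \<epsilon> / (2*C) * norm v"
        using close[of "x + v"] that t by simp
      also have "\<dots> \<le> \<epsilon> / (2*C) * (t * C)"
        using that \<open>\<epsilon> / (2*C) > 0\<close> by (intro mult_left_mono) auto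
      finally show ?thesis .
    qed
  qed (use t in auto)
  moreover have "\<forall>\<^sub>F t in at_right 0. 0 < t \<and> t * C < min r d"
    using r d C by (auto simp: eventually_at_right_field pos_less_divide_eq intro!: exI[of _ "min r d / C"])
  ultimately show ?thesis
    using C by (elim eventually_mono) (simp add: power2_eq_square mult_ac)
qed

text \<open>The second difference \<open>g (x + ts + tu) - g (x + ts) - g (x + tu) + g x\<close> is symmetric in \<open>s\<close> and
  \<open>u\<close> and equals both \<open>t\<^sup>2 D\<^sup>2g(s,u) + o(t\<^sup>2)\<close> and \<open>t\<^sup>2 D\<^sup>2g(u,s) + o(t\<^sup>2)\<close>.\<close>

theorem second_derivative_symmetric:
  fixes g :: "'a::real_normed_vector \<Rightarrow> 'b::real_inner"
  assumes r: "r > 0" and dg: "\<And>y. y \<in> ball x r \<Longrightarrow> (g has_derivative Dg y) (at y)"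
    and d2s: "((\<lambda>y. Dg y s) has_derivative D2s) (at x)"
    and d2u: "((\<lambda>y. Dg y u) has_derivative D2u) (at x)"
  shows "D2s u = D2u s"
proof (rule ccontr)
  assume "D2s u \<noteq> D2u s"
  define \<epsilon> where "\<epsilon> = norm (D2s u - D2u s) / 4"
  have "\<epsilon> > 0"
    using \<open>D2s u \<noteq> D2u s\<close> by (simp add: \<epsilon>_def)
  define \<Delta> where "\<Delta> t = g (x + t *\<^sub>R s + t *\<^sub>R u) - g (x + t *\<^sub>R s) - g (x + t *\<^sub>R u) + g x" for t :: real
  have "\<forall>\<^sub>F t in at_right 0. 0 < t \<and> norm (\<Delta> t - t\<^sup>2 *\<^sub>R D2s u) \<le> \<epsilon> * t\<^sup>2 \<and> norm (\<Delta> t - t\<^sup>2 *\<^sub>R D2u s) \<le> \<epsilon> * t\<^sup>2"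
  proof -
    have "\<forall>\<^sub>F t in at_right 0. norm (\<Delta> t - t\<^sup>2 *\<^sub>R D2s u) \<le> \<epsilon> * t\<^sup>2"
      unfolding \<Delta>_def by (rule second_difference_asymptotics[OF r dg d2s \<open>\<epsilon> > 0\<close>])
    moreover have "\<forall>\<^sub>F t in at_right 0. norm (\<Delta> t - t\<^sup>2 *\<^sub>R D2u s) \<le> \<epsilon> * t\<^sup>2"
      using second_difference_asymptotics[OF r dg d2u \<open>\<epsilon> > 0\<close>, where u = s]
      by (simp add: \<Delta>_def algebra_simps)
    ultimately show ?thesis
      using eventually_at_right_less[of 0] by eventually_elim blast
  qed
  then obtain t where t: "0 < t" and
    close: "norm (\<Delta> t - t\<^sup>2 *\<^sub>R D2s u) \<le> \<epsilon> * t\<^sup>2" "norm (\<Delta> t - t\<^sup>2 *\<^sub>R D2u s) \<le> \<epsilon> * t\<^sup>2"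
    using eventually_happens trivial_limit_at_right_real by blast
  have "t\<^sup>2 * (4 * \<epsilon>) = norm ((\<Delta> t - t\<^sup>2 *\<^sub>R D2u s) - (\<Delta> t - t\<^sup>2 *\<^sub>R D2s u))"
    by (simp add: \<epsilon>_def scaleR_diff_right[symmetric])
  also have "\<dots> \<le> 2 * \<epsilon> * t\<^sup>2"
    using norm_triangle_ineq4[of "\<Delta> t - t\<^sup>2 *\<^sub>R D2u s" "\<Delta> t - t\<^sup>2 *\<^sub>R D2s u"] close by simp
  finally show False
    using t \<open>\<epsilon> > 0\<close> by simp
qed

section \<open>Holomorphic functions of several variables\<close>

lemma norm_vector_scalar_mult: "norm (c *s v) = norm c * norm (v :: complex^'n)"
  by (simp add: norm_vec_def L2_set_right_distrib norm_mult)

lemma bounded_bilinear_vector_scalar_mult: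
  "bounded_bilinear ((*s) :: complex \<Rightarrow> complex^'n \<Rightarrow> complex^'n)"
proof
  show "\<exists>K. \<forall>c v. norm (c *s v) \<le> norm c * norm (v :: complex^'n) * K"
    by (intro exI[of _ 1]) (simp add: norm_vector_scalar_mult)
qed (auto simp: vec_eq_iff algebra_simps)

lemma open_contains_disc_family:
  fixes x :: "complex^'n"
  assumes "open Q" "x \<in> Q"
  obtains \<rho> \<epsilon> where "\<rho> > 0" "\<epsilon> > 0"
    "\<And>y t. y \<in> ball x \<rho> \<Longrightarrow> norm t \<le> 1 \<Longrightarrow> y + t *s (\<epsilon> *\<^sub>R v) \<in> Q"
proof -
  obtain r where r: "r > 0" "ball x r \<subseteq> Q"
    using assms open_contains_ball by blast
  define \<epsilon> where "\<epsilon> = r / (2 * (norm v + 1))"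
  have "norm v + 1 > 0"
    by (simp add: add_nonneg_pos)
  then have \<epsilon>: "\<epsilon> > 0" "\<epsilon> * (norm v + 1) = r / 2"
    using r by (simp_all add: \<epsilon>_def field_simps)
  then have "\<epsilon> * norm v < r / 2"
    by (simp add: distrib_left)
  have "y + t *s (\<epsilon> *\<^sub>R v) \<in> Q" if "y \<in> ball x (r/2)" "norm t \<le> 1" for y t
  proof -
    have "norm (t *s (\<epsilon> *\<^sub>R v)) \<le> \<epsilon> * norm v"
      using that(2) \<epsilon>(1) by (simp add: norm_vector_scalar_mult mult_left_le_one_le)
    moreover have "dist x (y + t *s (\<epsilon> *\<^sub>R v)) \<le> dist x y + norm (t *s (\<epsilon> *\<^sub>R v))"
      using dist_triangle[of x "y + t *s (\<epsilon> *\<^sub>R v)" y] by (simp add: dist_norm)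
    ultimately have "dist x (y + t *s (\<epsilon> *\<^sub>R v)) < r"
      using that(1) \<open>\<epsilon> * norm v < r / 2\<close> by simp
    then show ?thesis
      using r(2) by auto
  qed
  then show ?thesis
    using that[of "r/2" \<epsilon>] r \<epsilon> by auto
qed

lemma holo_fun_on_has_derivative:
  "holo_fun_on Q f \<Longrightarrow> y \<in> Q \<Longrightarrow> (f has_derivative frechet_derivative f (at y)) (at y)"
  unfolding holo_fun_on_def by (metis frechet_derivative_at)

lemma holo_fun_on_derivative_scale:
  "holo_fun_on Q f \<Longrightarrow> y \<in> Q \<Longrightarrow> frechet_derivative f (at y) (c *s v) = c * frechet_derivative f (at y) v"
  unfolding holo_fun_on_def by (metis frechet_derivative_at)

lemma holo_fun_on_continuous: "holo_fun_on Q f \<Longrightarrow> continuous_on Q f"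
  by (meson continuous_at_imp_continuous_on has_derivative_continuous holo_fun_on_has_derivative)

lemma holo_fun_on_cong:
  assumes "holo_fun_on Q f" "\<And>y. y \<in> Q \<Longrightarrow> f y = g y"
  shows "holo_fun_on Q g"
  using assms unfolding holo_fun_on_def by (metis has_derivative_transform_within_open)

lemma cis_circlepath: "circlepath 0 1 = (\<lambda>\<theta>. cis (2 * pi * \<theta>))"
  by (simp add: circlepath cis_conv_exp fun_eq_iff mult_ac)

text \<open>Cauchy's formula for the derivative of \<open>t \<mapsto> f (y + t u)\<close> at \<open>0\<close>, parametrised over \<open>[0,1]\<close>.\<close>

lemma holo_fun_on_derivative_integral:
  fixes f :: "complex^'n \<Rightarrow> complex"
  assumes hol: "holo_fun_on Q f" and disc: "\<And>t. norm t \<le> 1 \<Longrightarrow> y + t *s u \<in> Q"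
  shows "((\<lambda>\<theta>. f (y + cis (2*pi*\<theta>) *s u) / cis (2*pi*\<theta>)) has_integral frechet_derivative f (at y) u) {0..1}"
proof -
  define g where "g t = f (y + t *s u)" for t
  have g': "(g has_field_derivative frechet_derivative f (at (y + t *s u)) u) (at t)" if "norm t \<le> 1" for t
  proof -
    have "((\<lambda>t. y + t *s u) has_derivative (\<lambda>h. h *s u)) (at t)"
      using bounded_bilinear.FDERIV[OF bounded_bilinear_vector_scalar_mult has_derivative_ident has_derivative_const]
      by (auto intro!: derivative_eq_intros)
    from has_derivative_compose[OF this holo_fun_on_has_derivative[OF hol disc[OF that]]]
    show ?thesis
      unfolding has_field_derivative_def g_def o_def
      by (simp add: holo_fun_on_derivative_scale[OF hol disc[OF that]] mult_commute_abs)
  qed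
  have "continuous_on (cball 0 1) g"
    by (rule continuous_at_imp_continuous_on) (metis g' DERIV_isCont mem_cball_0)
  moreover have "g holomorphic_on ball 0 1"
    unfolding holomorphic_on_def field_differentiable_def
    using g' by (metis DERIV_subset mem_ball_0 less_imp_le subset_UNIV top_greatest)
  ultimately have "((\<lambda>t. g t / (t - 0) ^ Suc 1) has_contour_integral (2 * pi * \<i>) / fact 1 * (deriv ^^ 1) g 0)
      (circlepath 0 1)"
    by (intro Cauchy_has_contour_integral_higher_derivative_circlepath) auto
  moreover have "deriv g 0 = frechet_derivative f (at y) u"
    using g'[of 0] by (simp add: DERIV_imp_deriv)
  ultimately have "((\<lambda>\<theta>. g (circlepath 0 1 \<theta>) / (circlepath 0 1 \<theta>)\<^sup>2
      * vector_derivative (circlepath 0 1) (at \<theta> within {0..1}))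
      has_integral (2 * pi * \<i>) * frechet_derivative f (at y) u) {0..1}"
    unfolding has_contour_integral_def by (simp add: power2_eq_square)
  then have "((\<lambda>\<theta>. g (cis (2*pi*\<theta>)) / (cis (2*pi*\<theta>))\<^sup>2 * (2 * pi * \<i> * cis (2*pi*\<theta>)))
      has_integral (2 * pi * \<i>) * frechet_derivative f (at y) u) {0..1}"
    by (rule has_integral_eq[rotated])
       (simp add: vector_derivative_circlepath01 fun_cong[OF cis_circlepath] cis_conv_exp mult_ac)
  then have "((\<lambda>\<theta>. (2 * pi * \<i>) * (f (y + cis (2*pi*\<theta>) *s u) / cis (2*pi*\<theta>)))
      has_integral (2 * pi * \<i>) * frechet_derivative f (at y) u) {0..1}"
    by (rule has_integral_eq[rotated]) (simp add: g_def power2_eq_square field_simps)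
  then have "((\<lambda>\<theta>. inverse (2 * pi * \<i>) * ((2 * pi * \<i>) * (f (y + cis (2*pi*\<theta>) *s u) / cis (2*pi*\<theta>))))
      has_integral inverse (2 * pi * \<i>) * ((2 * pi * \<i>) * frechet_derivative f (at y) u)) {0..1}"
    by (rule has_integral_mult_right)
  moreover have "inverse (2 * pi * \<i>) * (2 * pi * \<i>) = 1"
    by (intro left_inverse) simp
  ultimately show ?thesis
    by (simp only: mult.assoc[symmetric] mult_1)
qed

lemma holo_fun_on_derivative_scaleR:
  "holo_fun_on Q f \<Longrightarrow> y \<in> Q \<Longrightarrow> frechet_derivative f (at y) (\<epsilon> *\<^sub>R v) = \<epsilon> * frechet_derivative f (at y) v"
  using holo_fun_on_has_derivative has_derivative_linear linear_scale by (metis scaleR_conv_of_real)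

lemma holo_fun_on_derivative_eq_integral:
  assumes hol: "holo_fun_on Q f" and disc: "\<And>t. norm t \<le> 1 \<Longrightarrow> y + t *s (\<epsilon> *\<^sub>R v) \<in> Q"
  shows "integral (cbox 0 1) (\<lambda>\<theta>. f (y + cis (2*pi*\<theta>) *s (\<epsilon> *\<^sub>R v)) / cis (2*pi*\<theta>))
      = \<epsilon> * frechet_derivative f (at y) v"
proof -
  have "y \<in> Q"
    using disc[of 0] by simp
  have "integral {0..1} (\<lambda>\<theta>. f (y + cis (2*pi*\<theta>) *s (\<epsilon> *\<^sub>R v)) / cis (2*pi*\<theta>))
      = frechet_derivative f (at y) (\<epsilon> *\<^sub>R v)"
    by (rule integral_unique[OF holo_fun_on_derivative_integral[OF hol disc]])
  then show ?thesis
    by (simp add: cbox_interval holo_fun_on_derivative_scaleR[OF hol \<open>y \<in> Q\<close>])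
qed

lemma continuous_on_disc_family:
  assumes "continuous_on Q f" and disc: "\<And>y t. y \<in> S \<Longrightarrow> norm t \<le> 1 \<Longrightarrow> y + t *s u \<in> Q"
  shows "continuous_on (S \<times> cbox 0 1) (\<lambda>(y, \<theta>). f (y + cis (2*pi*\<theta>) *s u) / cis (2*pi*\<theta>))"
proof -
  have "continuous_on (S \<times> cbox 0 1) (\<lambda>p. fst p + cis (2 * pi * snd p) *s u)"
    by (intro continuous_intros bounded_bilinear.continuous_on[OF bounded_bilinear_vector_scalar_mult])
  moreover have "(\<lambda>p. fst p + cis (2 * pi * snd p) *s u) ` (S \<times> cbox 0 1) \<subseteq> Q"
    using disc by auto
  ultimately have "continuous_on (S \<times> cbox 0 1) (\<lambda>p. f (fst p + cis (2 * pi * snd p) *s u))"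
    by (rule continuous_on_compose2[OF assms(1)])
  then show ?thesis
    unfolding case_prod_beta by (intro continuous_intros) auto
qed

text \<open>Regularity is bootstrapped from the Cauchy integral: continuity of its integrand gives
  continuity of the partial derivatives, which makes Leibniz's rule applicable to it.\<close>

lemma holo_fun_on_continuous_derivative:
  assumes hol: "holo_fun_on Q f"
  shows "continuous_on Q (\<lambda>y. frechet_derivative f (at y) v)"
proof (intro continuous_at_imp_continuous_on ballI)
  fix x assume "x \<in> Q"
  have "open Q"
    using hol by (simp add: holo_fun_on_def)
  then obtain \<rho> \<epsilon> where \<rho>: "\<rho> > 0" "\<epsilon> > 0"
    and disc: "\<And>y t. y \<in> ball x \<rho> \<Longrightarrow> norm t \<le> 1 \<Longrightarrow> y + t *s (\<epsilon> *\<^sub>R v) \<in> Q"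
    using open_contains_disc_family[OF _ \<open>x \<in> Q\<close>, where v = v] by metis
  have "continuous_on (ball x \<rho>) (\<lambda>y. integral (cbox 0 1)
      (\<lambda>\<theta>. f (y + cis (2*pi*\<theta>) *s (\<epsilon> *\<^sub>R v)) / cis (2*pi*\<theta>)))"
    by (intro integral_continuous_on_param continuous_on_disc_family[OF holo_fun_on_continuous[OF hol] disc])
  moreover have "integral (cbox 0 1) (\<lambda>\<theta>. f (y + cis (2*pi*\<theta>) *s (\<epsilon> *\<^sub>R v)) / cis (2*pi*\<theta>))
      = \<epsilon> * frechet_derivative f (at y) v" if "y \<in> ball x \<rho>" for y
    by (rule holo_fun_on_derivative_eq_integral[OF hol disc[OF that]])
  ultimately have "continuous_on (ball x \<rho>) (\<lambda>y. \<epsilon> * frechet_derivative f (at y) v)"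
    by (rule continuous_on_eq)
  then have "continuous_on (ball x \<rho>) (\<lambda>y. inverse \<epsilon> * (\<epsilon> * frechet_derivative f (at y) v))"
    by (rule continuous_on_mult[OF continuous_on_const])
  then have "continuous_on (ball x \<rho>) (\<lambda>y. frechet_derivative f (at y) v)"
    using \<rho> by (simp add: field_simps)
  then show "isCont (\<lambda>y. frechet_derivative f (at y) v) x"
    using \<rho> by (simp add: continuous_on_eq_continuous_at)
qed

lemma disc_integral_differentiable:
  fixes f :: "complex^'n \<Rightarrow> complex"
  assumes hol: "holo_fun_on Q f" and "\<rho> > 0"
    and disc: "\<And>y t. y \<in> ball x \<rho> \<Longrightarrow> norm t \<le> 1 \<Longrightarrow> y + t *s u \<in> Q"
  shows "(\<lambda>y. integral (cbox 0 1) (\<lambda>\<theta>. f (y + cis (2*pi*\<theta>) *s u) / cis (2*pi*\<theta>))) differentiable (at x)"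
proof -
  define P where "P y \<theta> = f (y + cis (2*pi*\<theta>) *s u) / cis (2*pi*\<theta>)" for y \<theta>
  define DP where "DP y \<theta> = Blinfun (\<lambda>h. frechet_derivative f (at (y + cis (2*pi*\<theta>) *s u)) h / cis (2*pi*\<theta>))"
    for y \<theta>
  have DP: "blinfun_apply (DP y \<theta>) = (\<lambda>h. frechet_derivative f (at (y + cis (2*pi*\<theta>) *s u)) h / cis (2*pi*\<theta>))"
    and P: "((\<lambda>y. P y \<theta>) has_derivative blinfun_apply (DP y \<theta>)) (at y)" if "y \<in> ball x \<rho>" for y \<theta>
  proof -
    have "(f has_derivative frechet_derivative f (at (y + cis (2*pi*\<theta>) *s u))) (at (y + cis (2*pi*\<theta>) *s u))"
      using disc[OF that] by (intro holo_fun_on_has_derivative[OF hol]) simp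
    from bounded_linear.has_derivative[OF bounded_linear_divide
        has_derivative_compose[OF has_derivative_add_const[OF has_derivative_ident] this]]
    have "((\<lambda>y. P y \<theta>) has_derivative (\<lambda>h. frechet_derivative f (at (y + cis (2*pi*\<theta>) *s u)) h
        / cis (2*pi*\<theta>))) (at y)"
      unfolding P_def .
    moreover from this have "blinfun_apply (DP y \<theta>) = (\<lambda>h. frechet_derivative f (at (y + cis (2*pi*\<theta>) *s u)) h / cis (2*pi*\<theta>))"
      unfolding DP_def by (intro bounded_linear_Blinfun_apply has_derivative_bounded_linear)
    ultimately show "blinfun_apply (DP y \<theta>) = (\<lambda>h. frechet_derivative f (at (y + cis (2*pi*\<theta>) *s u)) h / cis (2*pi*\<theta>))"
      and "((\<lambda>y. P y \<theta>) has_derivative blinfun_apply (DP y \<theta>)) (at y)"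
      by simp_all
  qed
  have "((\<lambda>y. integral (cbox 0 1) (P y)) has_derivative integral (cbox 0 1) (DP x)) (at x within ball x \<rho>)"
  proof (rule leibniz_rule)
    show "((\<lambda>y. P y \<theta>) has_derivative blinfun_apply (DP y \<theta>)) (at y within ball x \<rho>)"
      if "y \<in> ball x \<rho>" for y \<theta>
      using P[OF that] by (rule has_derivative_at_withinI)
    show "P y integrable_on cbox 0 1" if "y \<in> ball x \<rho>" for y
      using holo_fun_on_derivative_integral[OF hol disc[OF that]] unfolding P_def cbox_interval by blast
    show "continuous_on (ball x \<rho> \<times> cbox 0 1) (\<lambda>(y, \<theta>). DP y \<theta>)"
    proof (rule continuous_on_blinfun_componentwise)
      fix i :: "complex^'n"
      have "continuous_on (ball x \<rho> \<times> cbox 0 1)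
          (\<lambda>(y, \<theta>). frechet_derivative f (at (y + cis (2*pi*\<theta>) *s u)) i / cis (2*pi*\<theta>))"
        by (rule continuous_on_disc_family[OF holo_fun_on_continuous_derivative[OF hol] disc])
      then show "continuous_on (ball x \<rho> \<times> cbox 0 1) (\<lambda>p. blinfun_apply ((\<lambda>(y, \<theta>). DP y \<theta>) p) i)"
        by (rule continuous_on_eq) (auto simp: DP)
    qed
  qed (use \<open>\<rho> > 0\<close> in auto)
  then show ?thesis
    using \<open>\<rho> > 0\<close> at_within_open[of x "ball x \<rho>"] unfolding differentiable_def P_def by force
qed

lemma holo_fun_on_derivative_differentiable:
  fixes f :: "complex^'n \<Rightarrow> complex"
  assumes hol: "holo_fun_on Q f" and "x \<in> Q"
  shows "(\<lambda>y. frechet_derivative f (at y) v) differentiable (at x)"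
proof -
  have "open Q"
    using hol by (simp add: holo_fun_on_def)
  then obtain \<rho> \<epsilon> where \<rho>: "\<rho> > 0" "\<epsilon> > 0"
    and disc: "\<And>y t. y \<in> ball x \<rho> \<Longrightarrow> norm t \<le> 1 \<Longrightarrow> y + t *s (\<epsilon> *\<^sub>R v) \<in> Q"
    using open_contains_disc_family[OF _ \<open>x \<in> Q\<close>, where v = v] by metis
  obtain D where "((\<lambda>y. integral (cbox 0 1) (\<lambda>\<theta>. f (y + cis (2*pi*\<theta>) *s (\<epsilon> *\<^sub>R v)) / cis (2*pi*\<theta>)))
      has_derivative D) (at x)"
    using disc_integral_differentiable[OF hol \<rho>(1) disc] unfolding differentiable_def by blast
  then have "((\<lambda>y. \<epsilon> * frechet_derivative f (at y) v) has_derivative D) (at x)"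
  proof (rule has_derivative_transform_within_open[OF _ open_ball])
    show "x \<in> ball x \<rho>"
      using \<rho> by simp
  qed (rule holo_fun_on_derivative_eq_integral[OF hol disc])
  then have "(\<lambda>y. inverse \<epsilon> * (\<epsilon> * frechet_derivative f (at y) v)) differentiable (at x)"
    unfolding differentiable_def by (blast dest: has_derivative_mult_right)
  then show ?thesis
    using \<rho> by simp
qed

abbreviation frechet_derivative2 :: "('a::real_normed_vector \<Rightarrow> 'b::real_normed_vector) \<Rightarrow> 'a \<Rightarrow> 'a \<Rightarrow> 'a \<Rightarrow> 'b" where
  "frechet_derivative2 f x u \<equiv> frechet_derivative (\<lambda>y. frechet_derivative f (at y) u) (at x)"

lemma holo_fun_on_derivative_has_derivative:
  fixes f :: "complex^'n \<Rightarrow> complex"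
  shows "holo_fun_on Q f \<Longrightarrow> x \<in> Q \<Longrightarrow>
    ((\<lambda>y. frechet_derivative f (at y) u) has_derivative frechet_derivative2 f x u) (at x)"
  by (simp add: holo_fun_on_derivative_differentiable flip: frechet_derivative_works)

lemma holo_fun_on_derivative2_symmetric:
  fixes f :: "complex^'n \<Rightarrow> complex"
  assumes hol: "holo_fun_on Q f" and "x \<in> Q"
  shows "frechet_derivative2 f x u s = frechet_derivative2 f x s u"
proof -
  have "open Q"
    using hol by (simp add: holo_fun_on_def)
  then obtain r where "r > 0" "ball x r \<subseteq> Q"
    using \<open>x \<in> Q\<close> open_contains_ball by blast
  then show ?thesis
    by (intro second_derivative_symmetric[where g = f, OF \<open>r > 0\<close> _
          holo_fun_on_derivative_has_derivative[OF hol \<open>x \<in> Q\<close>]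
          holo_fun_on_derivative_has_derivative[OF hol \<open>x \<in> Q\<close>]] holo_fun_on_has_derivative[OF hol])
       auto
qed

lemma holo_fun_on_derivative2_scale:
  fixes f :: "complex^'n \<Rightarrow> complex"
  assumes hol: "holo_fun_on Q f" and "x \<in> Q"
  shows "frechet_derivative2 f x (c *s u) s = c * frechet_derivative2 f x u s"
proof -
  have "((\<lambda>y. c * frechet_derivative f (at y) u) has_derivative (\<lambda>s. c * frechet_derivative2 f x u s)) (at x)"
    by (intro has_derivative_mult_right holo_fun_on_derivative_has_derivative[OF hol \<open>x \<in> Q\<close>])
  then have "((\<lambda>y. frechet_derivative f (at y) (c *s u)) has_derivative (\<lambda>s. c * frechet_derivative2 f x u s)) (at x)"
  proof (rule has_derivative_transform_within_open)
    show "open Q"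
      using hol by (simp add: holo_fun_on_def)
    show "c * frechet_derivative f (at y) u = frechet_derivative f (at y) (c *s u)" if "y \<in> Q" for y
      by (simp add: holo_fun_on_derivative_scale[OF hol that])
  qed (rule \<open>x \<in> Q\<close>)
  then show ?thesis
    by (simp add: frechet_derivative_at[symmetric])
qed

lemma holo_fun_on_frechet_derivative:
  fixes f :: "complex^'n \<Rightarrow> complex"
  assumes hol: "holo_fun_on Q f"
  shows "holo_fun_on Q (\<lambda>y. frechet_derivative f (at y) u)"
  unfolding holo_fun_on_def
proof (intro conjI ballI exI)
  show "open Q"
    using hol by (simp add: holo_fun_on_def)
  fix x assume "x \<in> Q"
  show "((\<lambda>y. frechet_derivative f (at y) u) has_derivative frechet_derivative2 f x u) (at x)"
    by (rule holo_fun_on_derivative_has_derivative[OF hol \<open>x \<in> Q\<close>])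
  show "\<forall>c v. frechet_derivative2 f x u (c *s v) = c * frechet_derivative2 f x u v"
    using holo_fun_on_derivative2_symmetric[OF hol \<open>x \<in> Q\<close>, of u] holo_fun_on_derivative2_scale[OF hol \<open>x \<in> Q\<close>]
    by simp
qed

lemma linear_complex_expansion:
  fixes L :: "complex^'n \<Rightarrow> complex^'m"
  assumes "linear L" "\<And>c v. L (c *s v) = c *s L v"
  shows "L v = (\<Sum>l\<in>UNIV. (v $ l) *s L (axis l 1))"
proof -
  have "L v = L (\<Sum>l\<in>UNIV. (v $ l) *s axis l 1)"
    by (simp add: basis_expansion)
  also have "\<dots> = (\<Sum>l\<in>UNIV. (v $ l) *s L (axis l 1))"
    using assms by (simp add: linear_sum)
  finally show ?thesis .
qed

lemma holo_map_on_has_derivative_components: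
  fixes a :: "complex^'n \<Rightarrow> complex^'m"
  assumes "holo_map_on Q a" "y \<in> Q"
  shows "(a has_derivative (\<lambda>h. \<chi> j. frechet_derivative (\<lambda>z. a z $ j) (at y) h)) (at y)"
proof -
  have "((\<lambda>x. \<Sum>j\<in>UNIV. (a x $ j) *s axis j 1) has_derivative
      (\<lambda>h. \<Sum>j\<in>UNIV. frechet_derivative (\<lambda>z. a z $ j) (at y) h *s axis j (1::complex))) (at y)"
    using assms unfolding holo_map_on_def
    by (intro has_derivative_sum bounded_linear.has_derivative[OF
          bounded_bilinear.bounded_linear_left[OF bounded_bilinear_vector_scalar_mult]]
          holo_fun_on_has_derivative) auto
  moreover have "(\<lambda>h. \<Sum>j\<in>UNIV. frechet_derivative (\<lambda>z. a z $ j) (at y) h *s axis j (1::complex))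
      = (\<lambda>h. \<chi> j. frechet_derivative (\<lambda>z. a z $ j) (at y) h)"
    using basis_expansion[of "\<chi> j. frechet_derivative (\<lambda>z. a z $ j) (at y) _"] by simp
  ultimately show ?thesis
    by (simp add: basis_expansion)
qed

lemma holo_map_on_has_derivative:
  "holo_map_on Q a \<Longrightarrow> y \<in> Q \<Longrightarrow> (a has_derivative frechet_derivative a (at y)) (at y)"
  using holo_map_on_has_derivative_components frechet_derivative_at by metis

lemma holo_map_on_derivative_component:
  "holo_map_on Q a \<Longrightarrow> y \<in> Q \<Longrightarrow> frechet_derivative a (at y) h $ j = frechet_derivative (\<lambda>z. a z $ j) (at y) h"
  by (simp flip: frechet_derivative_at[OF holo_map_on_has_derivative_components])

lemma holo_map_on_derivative_scale:
  assumes "holo_map_on Q a" "y \<in> Q"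
  shows "frechet_derivative a (at y) (c *s v) = c *s frechet_derivative a (at y) v"
proof -
  have "holo_fun_on Q (\<lambda>z. a z $ j)" for j
    using assms(1) by (simp add: holo_map_on_def)
  then show ?thesis
    by (simp add: vec_eq_iff holo_map_on_derivative_component[OF assms] holo_fun_on_derivative_scale[OF _ assms(2)])
qed

lemma holo_map_on_frechet_derivative:
  assumes "holo_map_on Q a"
  shows "holo_map_on Q (\<lambda>y. frechet_derivative a (at y) u)"
  unfolding holo_map_on_def
proof
  fix j
  show "holo_fun_on Q (\<lambda>y. frechet_derivative a (at y) u $ j)"
    using assms holo_fun_on_frechet_derivative[of Q "\<lambda>z. a z $ j" u]
    by (auto simp: holo_map_on_def holo_map_on_derivative_component intro: holo_fun_on_cong)
qed

lemma holo_map_on_subset: "holo_map_on Q F \<Longrightarrow> open V \<Longrightarrow> V \<subseteq> Q \<Longrightarrow> holo_map_on V F"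
  unfolding holo_map_on_def holo_fun_on_def by blast

lemma holo_map_on_derivative_has_derivative:
  "holo_map_on Q a \<Longrightarrow> x \<in> Q \<Longrightarrow>
    ((\<lambda>y. frechet_derivative a (at y) u) has_derivative frechet_derivative2 a x u) (at x)"
  by (rule holo_map_on_has_derivative[OF holo_map_on_frechet_derivative])

lemma holo_map_on_derivative2_symmetric:
  assumes hol: "holo_map_on Q a" and "x \<in> Q"
  shows "frechet_derivative2 a x u s = frechet_derivative2 a x s u"
proof -
  have "open Q"
    using hol by (auto simp: holo_map_on_def holo_fun_on_def)
  then obtain r where "r > 0" "ball x r \<subseteq> Q"
    using \<open>x \<in> Q\<close> open_contains_ball by blast
  then show ?thesis
    by (intro second_derivative_symmetric[where g = a, OF \<open>r > 0\<close> _
          holo_map_on_derivative_has_derivative[OF hol \<open>x \<in> Q\<close>]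
          holo_map_on_derivative_has_derivative[OF hol \<open>x \<in> Q\<close>]] holo_map_on_has_derivative[OF hol])
       auto
qed

lemma holo_map_on_derivative2_expansion:
  assumes hol: "holo_map_on Q a" and "x \<in> Q"
  shows "frechet_derivative2 a x v s = (\<Sum>l\<in>UNIV. (v $ l) *s frechet_derivative2 a x (axis l 1) s)"
proof -
  have "linear (frechet_derivative2 a x s)"
    using holo_map_on_derivative_has_derivative[OF hol \<open>x \<in> Q\<close>] by (rule has_derivative_linear)
  moreover have "frechet_derivative2 a x s (c *s v) = c *s frechet_derivative2 a x s v" for c v
    by (rule holo_map_on_derivative_scale[OF holo_map_on_frechet_derivative[OF hol] \<open>x \<in> Q\<close>])
  ultimately have "frechet_derivative2 a x s v = (\<Sum>l\<in>UNIV. (v $ l) *s frechet_derivative2 a x s (axis l 1))"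
    by (rule linear_complex_expansion)
  then show ?thesis
    using holo_map_on_derivative2_symmetric[OF hol \<open>x \<in> Q\<close>] by simp
qed

lemma has_derivative_holo_map_derivative_apply:
  assumes a: "holo_map_on Q a" and Y: "holo_map_on Q Y" and "x \<in> Q"
  shows "((\<lambda>y. frechet_derivative a (at y) (Y y)) has_derivative
    (\<lambda>s. frechet_derivative2 a x (Y x) s + frechet_derivative a (at x) (frechet_derivative Y (at x) s))) (at x)"
proof -
  have "open Q"
    using a by (auto simp: holo_map_on_def holo_fun_on_def)
  have linear: "linear (frechet_derivative a (at y))" if "y \<in> Q" for y
    using holo_map_on_has_derivative[OF a that] by (rule has_derivative_linear)
  have expand: "frechet_derivative a (at y) v = (\<Sum>l\<in>UNIV. (v $ l) *s frechet_derivative a (at y) (axis l 1))"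
    if "y \<in> Q" for y v
    by (rule linear_complex_expansion[OF linear[OF that] holo_map_on_derivative_scale[OF a that]])
  have "((\<lambda>y. \<Sum>l\<in>UNIV. (Y y $ l) *s frechet_derivative a (at y) (axis l 1)) has_derivative
      (\<lambda>s. \<Sum>l\<in>UNIV. (Y x $ l) *s frechet_derivative2 a x (axis l 1) s
        + (frechet_derivative Y (at x) s $ l) *s frechet_derivative a (at x) (axis l 1))) (at x)"
    by (intro has_derivative_sum bounded_bilinear.FDERIV[OF bounded_bilinear_vector_scalar_mult]
        bounded_linear.has_derivative[OF bounded_linear_vec_nth] holo_map_on_has_derivative[OF Y \<open>x \<in> Q\<close>]
        holo_map_on_derivative_has_derivative[OF a \<open>x \<in> Q\<close>])
  then have "((\<lambda>y. frechet_derivative a (at y) (Y y)) has_derivative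
      (\<lambda>s. \<Sum>l\<in>UNIV. (Y x $ l) *s frechet_derivative2 a x (axis l 1) s
        + (frechet_derivative Y (at x) s $ l) *s frechet_derivative a (at x) (axis l 1))) (at x)"
    by (rule has_derivative_transform_within_open[OF _ \<open>open Q\<close> \<open>x \<in> Q\<close>]) (simp add: expand)
  moreover have "(\<Sum>l\<in>UNIV. (Y x $ l) *s frechet_derivative2 a x (axis l 1) s
        + (frechet_derivative Y (at x) s $ l) *s frechet_derivative a (at x) (axis l 1))
      = frechet_derivative2 a x (Y x) s + frechet_derivative a (at x) (frechet_derivative Y (at x) s)" for s
    by (simp only: sum.distrib holo_map_on_derivative2_expansion[OF a \<open>x \<in> Q\<close>, of "Y x" s]
        expand[OF \<open>x \<in> Q\<close>, of "frechet_derivative Y (at x) s"])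
  ultimately show ?thesis
    by simp
qed

section \<open>The Lie derivative of \<open>\<omega> \<and> (d\<omega>)^k\<close> in a chart\<close>

lemma bounded_bilinear_cpair: "bounded_bilinear (cpair :: complex^'n \<Rightarrow> complex^'n \<Rightarrow> complex)"
proof
  show "\<exists>K. \<forall>a b. norm (cpair a b) \<le> norm a * norm (b :: complex^'n) * K"
  proof (intro exI allI)
    fix a b :: "complex^'n"
    have "norm (cpair a b) \<le> (\<Sum>j\<in>UNIV. norm (a $ j) * norm (b $ j))"
      unfolding cpair_def by (rule order_trans[OF norm_sum]) (simp add: norm_mult)
    also have "\<dots> \<le> (\<Sum>j\<in>(UNIV::'n set). norm a * norm b)"
      by (intro sum_mono mult_mono Finite_Cartesian_Product.norm_nth_le) auto
    finally show "norm (cpair a b) \<le> norm a * norm b * of_nat CARD('n)"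
      by (simp add: mult_ac)
  qed
qed (auto simp: cpair_def sum.distrib algebra_simps scaleR_sum_right)

lemma cpair_scale_left: "cpair (c *s x) y = c * cpair x y"
  by (simp add: cpair_def sum_distrib_left mult.assoc)

lemma cpair_scale_right: "cpair x (c *s y) = c * cpair x y"
  by (simp add: cpair_def sum_distrib_left mult.left_commute)

lemma has_derivative_contact_top:
  fixes a :: "complex^'n \<Rightarrow> complex^'n"
  assumes a: "holo_map_on Q a" and "x \<in> Q"
  shows "((\<lambda>y. contact_top k a y v) has_derivative (\<lambda>s.
    (wedge_prod (\<lambda>z. cpair (frechet_derivative a (at x) s) z) (\<lambda>_. dform_bilin a x) k v
     + (\<Sum>m<k. wedge_prod (cpair (a x)) ((\<lambda>_. dform_bilin a x)(m := \<lambda>z z'.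
          cpair (frechet_derivative2 a x z s) z' - cpair (frechet_derivative2 a x z' s) z)) k v)) / 2^k)) (at x)"
proof -
  have cpair_left: "bounded_linear (\<lambda>y. cpair y z)" for z :: "complex^'n"
    by (rule bounded_bilinear.bounded_linear_left[OF bounded_bilinear_cpair])
  have "((\<lambda>y. wedge_prod (cpair (a y)) (\<lambda>_. dform_bilin a y) k v) has_derivative (\<lambda>s.
    wedge_prod (\<lambda>z. cpair (frechet_derivative a (at x) s) z) (\<lambda>_. dform_bilin a x) k v
     + (\<Sum>m<k. wedge_prod (cpair (a x)) ((\<lambda>_. dform_bilin a x)(m := \<lambda>z z'.
          cpair (frechet_derivative2 a x z s) z' - cpair (frechet_derivative2 a x z' s) z)) k v))) (at x)"
    unfolding dform_bilin_def
    by (intro has_derivative_wedge_prod has_derivative_diff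
        bounded_linear.has_derivative[OF cpair_left] holo_map_on_has_derivative[OF a \<open>x \<in> Q\<close>]
        holo_map_on_derivative_has_derivative[OF a \<open>x \<in> Q\<close>])
  from bounded_linear.has_derivative[OF bounded_linear_divide this]
  show ?thesis
    by (simp add: contact_top_eq_wedge_prod)
qed

lemma lie_identity_derivative:
  fixes a Y :: "complex^'n \<Rightarrow> complex^'n"
  assumes a: "holo_map_on Q a" and Y: "holo_map_on Q Y" and h: "holo_fun_on Q h" and "x \<in> Q"
    and lie: "\<And>y v. y \<in> Q \<Longrightarrow> lie_1form Y a y v = h y * cpair (a y) v"
  shows "cpair (frechet_derivative2 a x (Y x) z + frechet_derivative a (at x) (frechet_derivative Y (at x) z)) z'
       + (cpair (a x) (frechet_derivative2 Y x z' z) + cpair (frechet_derivative a (at x) z) (frechet_derivative Y (at x) z'))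
       = h x * cpair (frechet_derivative a (at x) z) z' + frechet_derivative h (at x) z * cpair (a x) z'"
proof -
  have "open Q"
    using h by (simp add: holo_fun_on_def)
  define E where "E y = cpair (frechet_derivative a (at y) (Y y)) z' + cpair (a y) (frechet_derivative Y (at y) z')
    - h y * cpair (a y) z'" for y
  have "(E has_derivative (\<lambda>s.
      cpair (frechet_derivative2 a x (Y x) s + frechet_derivative a (at x) (frechet_derivative Y (at x) s)) z'
      + (cpair (a x) (frechet_derivative2 Y x z' s) + cpair (frechet_derivative a (at x) s) (frechet_derivative Y (at x) z'))
      - (h x * cpair (frechet_derivative a (at x) s) z' + frechet_derivative h (at x) s * cpair (a x) z'))) (at x)"
    unfolding E_def
    by (intro has_derivative_diff has_derivative_add has_derivative_mult
        bounded_linear.has_derivative[OF bounded_bilinear.bounded_linear_left[OF bounded_bilinear_cpair]]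
        bounded_bilinear.FDERIV[OF bounded_bilinear_cpair]
        has_derivative_holo_map_derivative_apply[OF a Y \<open>x \<in> Q\<close>]
        holo_map_on_has_derivative[OF a \<open>x \<in> Q\<close>] holo_map_on_derivative_has_derivative[OF Y \<open>x \<in> Q\<close>]
        holo_fun_on_has_derivative[OF h \<open>x \<in> Q\<close>])
  moreover have "(E has_derivative (\<lambda>s. 0)) (at x)"
    by (rule has_derivative_transform_within_open[OF has_derivative_const \<open>open Q\<close> \<open>x \<in> Q\<close>])
       (simp add: E_def lie[symmetric] lie_1form_def)
  ultimately have "(\<lambda>s.
      cpair (frechet_derivative2 a x (Y x) s + frechet_derivative a (at x) (frechet_derivative Y (at x) s)) z'
      + (cpair (a x) (frechet_derivative2 Y x z' s) + cpair (frechet_derivative a (at x) s) (frechet_derivative Y (at x) z'))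
      - (h x * cpair (frechet_derivative a (at x) s) z' + frechet_derivative h (at x) s * cpair (a x) z')) = (\<lambda>s. 0)"
    by (rule has_derivative_unique)
  from fun_cong[OF this, of z] show ?thesis
    by (simp only: right_minus_eq)
qed

lemma dform_bilin_lie_derivative:
  fixes a Y :: "complex^'n \<Rightarrow> complex^'n"
  assumes a: "holo_map_on Q a" and Y: "holo_map_on Q Y" and h: "holo_fun_on Q h" and "x \<in> Q"
    and lie: "\<And>y v. y \<in> Q \<Longrightarrow> lie_1form Y a y v = h y * cpair (a y) v"
  shows "cpair (frechet_derivative2 a x z (Y x)) z' - cpair (frechet_derivative2 a x z' (Y x)) z
    = h x * dform_bilin a x z z'
      - (dform_bilin a x (frechet_derivative Y (at x) z) z' + dform_bilin a x z (frechet_derivative Y (at x) z'))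
      + (frechet_derivative h (at x) z * cpair (a x) z' - frechet_derivative h (at x) z' * cpair (a x) z)"
proof -
  have solved: "cpair (frechet_derivative2 a x z (Y x)) z'
      = h x * cpair (frechet_derivative a (at x) z) z' + frechet_derivative h (at x) z * cpair (a x) z'
        - cpair (frechet_derivative a (at x) (frechet_derivative Y (at x) z)) z'
        - cpair (a x) (frechet_derivative2 Y x z' z)
        - cpair (frechet_derivative a (at x) z) (frechet_derivative Y (at x) z')" for z z'
    using lie_identity_derivative[OF a Y h \<open>x \<in> Q\<close> lie, of z z']
      holo_map_on_derivative2_symmetric[OF a \<open>x \<in> Q\<close>, of z "Y x"]
    by (simp add: bounded_bilinear.add_left[OF bounded_bilinear_cpair] algebra_simps)
  show ?thesis
    unfolding solved dform_bilin_def
    by (simp add: holo_map_on_derivative2_symmetric[OF Y \<open>x \<in> Q\<close>, of z' z] algebra_simps)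
qed

lemma contact_top_conformal_vanishes:
  fixes a b :: "complex^'n \<Rightarrow> complex^'n"
  assumes a: "holo_map_on Q a" and b: "holo_map_on Q b" and f: "holo_fun_on Q f" and "x \<in> Q"
    and conformal: "\<And>y. y \<in> Q \<Longrightarrow> a y = f y *s b y"
    and vanishes: "contact_top k b x = (\<lambda>v. 0)"
  shows "contact_top k a x = (\<lambda>v. 0)"
proof
  fix v
  have "open Q"
    using f by (simp add: holo_fun_on_def)
  have "((\<lambda>y. f y *s b y) has_derivative (\<lambda>s. f x *s frechet_derivative b (at x) s + frechet_derivative f (at x) s *s b x)) (at x)"
    by (intro bounded_bilinear.FDERIV[OF bounded_bilinear_vector_scalar_mult]
        holo_fun_on_has_derivative[OF f \<open>x \<in> Q\<close>] holo_map_on_has_derivative[OF b \<open>x \<in> Q\<close>])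
  then have "(a has_derivative (\<lambda>s. f x *s frechet_derivative b (at x) s + frechet_derivative f (at x) s *s b x)) (at x)"
    by (rule has_derivative_transform_within_open[OF _ \<open>open Q\<close> \<open>x \<in> Q\<close>]) (simp add: conformal)
  then have Da: "frechet_derivative a (at x) s = f x *s frechet_derivative b (at x) s + frechet_derivative f (at x) s *s b x" for s
    by (simp add: frechet_derivative_at[symmetric])
  have "cpair (a x) = (\<lambda>z. f x * cpair (b x) z)"
    by (simp add: conformal[OF \<open>x \<in> Q\<close>] cpair_scale_left fun_eq_iff)
  moreover have "dform_bilin a x = (\<lambda>z z'. f x * dform_bilin b x z z'
      + (frechet_derivative f (at x) z * cpair (b x) z' - frechet_derivative f (at x) z' * cpair (b x) z))"
    by (simp add: dform_bilin_def Da bounded_bilinear.add_left[OF bounded_bilinear_cpair] cpair_scale_left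
        fun_eq_iff algebra_simps)
  ultimately show "contact_top k a x v = 0"
    using fun_cong[OF vanishes, of v]
    by (simp add: contact_top_eq_wedge_prod wedge_prod_conformal)
qed

theorem contact_H_derivative_vanishes:
  fixes a Y :: "complex^'n \<Rightarrow> complex^'n"
  assumes a: "holo_map_on Q a" and Y: "holo_map_on Q Y" and h: "holo_fun_on Q h" and "x \<in> Q"
    and lie: "\<And>y v. y \<in> Q \<Longrightarrow> lie_1form Y a y v = h y * cpair (a y) v"
    and vanishes: "contact_top k a x = (\<lambda>v. 0)"
  shows "frechet_derivative (contact_H k a) (at x) (Y x) = 0"
proof -
  let ?w = "cpair (a x)" and ?b = "dform_bilin a x" and ?K = "frechet_derivative Y (at x)"
  define e where "e = (\<lambda>i. axis (coord_order i :: 'n) (1::complex))"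
  have Da: "frechet_derivative a (at x) (z + c *s z') = frechet_derivative a (at x) z + c *s frechet_derivative a (at x) z'"
    for z z' c
    using has_derivative_linear[OF holo_map_on_has_derivative[OF a \<open>x \<in> Q\<close>]]
    by (simp add: linear_add holo_map_on_derivative_scale[OF a \<open>x \<in> Q\<close>])
  note cpair_add = bounded_bilinear.add_left[OF bounded_bilinear_cpair] bounded_bilinear.add_right[OF bounded_bilinear_cpair]
  have "wedge_prod (\<lambda>z. cpair (frechet_derivative a (at x) (Y x)) z) (\<lambda>_. ?b) k e
      + (\<Sum>m<k. wedge_prod ?w ((\<lambda>_. ?b)(m := \<lambda>z z'.
          cpair (frechet_derivative2 a x z (Y x)) z' - cpair (frechet_derivative2 a x z' (Y x)) z)) k e) = 0"
  proof (rule wedge_prod_lie_derivative_vanishes)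
    show "?w (z + c *s z') = ?w z + c * ?w z'" for z z' c
      by (simp add: cpair_add cpair_scale_right)
    show "?b (z + c *s z') y = ?b z y + c * ?b z' y" for z z' y c
      by (simp add: dform_bilin_def Da cpair_add cpair_scale_left cpair_scale_right algebra_simps)
    show "?b z (y + c *s y') = ?b z y + c * ?b z y'" for z y y' c
      by (simp add: dform_bilin_def Da cpair_add cpair_scale_left cpair_scale_right algebra_simps)
    show "wedge_prod ?w (\<lambda>_. ?b) k v = 0" for v
      using fun_cong[OF vanishes, of v] by (simp add: contact_top_eq_wedge_prod)
    show "cpair (frechet_derivative a (at x) (Y x)) z = h x * ?w z - ?w (?K z)" for z
      using lie[OF \<open>x \<in> Q\<close>, of z] by (simp add: lie_1form_def algebra_simps)
  qed (rule dform_bilin_lie_derivative[OF a Y h \<open>x \<in> Q\<close> lie])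
  moreover have "contact_H k a = (\<lambda>y. contact_top k a y e)"
    by (simp add: contact_H_def e_def fun_eq_iff)
  ultimately show ?thesis
    using frechet_derivative_at[OF has_derivative_contact_top[OF a \<open>x \<in> Q\<close>, of k e], symmetric] by simp
qed

section \<open>From charts to the manifold\<close>

lemma holo_atlas_inj_on:
  assumes "holo_atlas A" "c \<in> A"
  shows "inj_on (snd c) (fst c)"
proof -
  obtain V \<phi> where c: "c = (V, \<phi>)"
    by (cases c)
  then obtain \<psi> where "homeomorphism V (\<phi> ` V) \<phi> \<psi>"
    using assms unfolding holo_atlas_def by fastforce
  then show ?thesis
    using c by (simp add: homeomorphism_def inj_on_def) metis
qed

lemma loc_apply: "inj_on (snd c) (fst c) \<Longrightarrow> p \<in> fst c \<Longrightarrow> loc c g (snd c p) = g p"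
  by (simp add: loc_def)

lemma martinet_contact_top_vanishes:
  assumes atlas: "holo_atlas A" and scf: "singular_contact_form k A U w" and "c \<in> A"
    and p: "p \<in> martinet k A U w \<inter> U i \<inter> fst c"
  shows "contact_top k (loc c (w i c)) (snd c p) = (\<lambda>v. 0)"
proof -
  have inj: "inj_on (snd c) (fst c)"
    by (rule holo_atlas_inj_on[OF atlas \<open>c \<in> A\<close>])
  obtain j where "p \<in> vanishing_set k A (U j) (w j)"
    using p unfolding martinet_def by blast
  then have "p \<in> U j" and vanishes: "contact_top k (loc c (w j c)) (snd c p) = (\<lambda>v. 0)"
    using \<open>c \<in> A\<close> p unfolding vanishing_set_def by auto
  obtain f where f: "mholo_fun A (U i \<inter> U j) f"
    and transition: "\<And>c p. c \<in> A \<Longrightarrow> p \<in> U i \<inter> U j \<inter> fst c \<Longrightarrow> w i c p = f p *s w j c p"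
    using scf unfolding singular_contact_form_def by blast
  define Q where "Q = snd c ` (U i \<inter> U j \<inter> fst c)"
  have hf: "holo_fun_on Q (loc c f)"
    using f \<open>c \<in> A\<close> unfolding mholo_fun_def Q_def by (simp add: Int_assoc)
  then have "open Q"
    by (simp add: holo_fun_on_def)
  have "holo_map_on (snd c ` (U l \<inter> fst c)) (loc c (w l c))" for l
    using scf \<open>c \<in> A\<close> unfolding singular_contact_form_def holo_1form_def by blast
  then have "holo_map_on Q (loc c (w l c))" if "l \<in> {i, j}" for l
    by (rule holo_map_on_subset[OF _ \<open>open Q\<close>]) (use that in \<open>auto simp: Q_def\<close>)
  moreover have "loc c (w i c) y = loc c f y *s loc c (w j c) y" if "y \<in> Q" for y
    using that transition[OF \<open>c \<in> A\<close>] by (auto simp: Q_def loc_apply[OF inj])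
  moreover have "snd c p \<in> Q"
    using p \<open>p \<in> U j\<close> by (simp add: Q_def)
  ultimately show ?thesis
    using contact_top_conformal_vanishes[OF _ _ hf _ _ vanishes] by blast
qed

lemma inf_contact_transf_in_chart:
  assumes "inf_contact_transf A U w X" "c \<in> A" "inj_on (snd c) (fst c)"
  obtains h where "holo_fun_on (snd c ` (U i \<inter> fst c)) h"
    and "\<And>y v. y \<in> snd c ` (U i \<inter> fst c) \<Longrightarrow>
      lie_1form (loc c (X c)) (loc c (w i c)) y v = h y * cpair (loc c (w i c) y) v"
proof -
  obtain h where "mholo_fun A (U i) h"
    and lie: "\<And>c p v. c \<in> A \<Longrightarrow> p \<in> U i \<inter> fst c \<Longrightarrow>
        lie_1form (loc c (X c)) (loc c (w i c)) (snd c p) v = h p * cpair (w i c p) v"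
    using assms(1) unfolding inf_contact_transf_def by blast
  then have "holo_fun_on (snd c ` (U i \<inter> fst c)) (loc c h)"
    using \<open>c \<in> A\<close> unfolding mholo_fun_def by blast
  moreover have "lie_1form (loc c (X c)) (loc c (w i c)) y v = loc c h y * cpair (loc c (w i c) y) v"
    if "y \<in> snd c ` (U i \<inter> fst c)" for y v
    using that lie[OF \<open>c \<in> A\<close>] by (auto simp: loc_apply[OF assms(3)])
  ultimately show ?thesis
    using that by blast
qed

theorem theorem6p4:
  fixes A :: "('m::{t2_space,second_countable_topology}, 'n::finite) chart set"
    and k :: nat
    and U :: "'i \<Rightarrow> 'm set"
    and w :: "'i \<Rightarrow> ('m,'n) chart \<Rightarrow> 'm \<Rightarrow> complex^'n"
    and X :: "('m,'n) chart \<Rightarrow> 'm \<Rightarrow> complex^'n"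
  assumes "complex_manifold A"
    and "CARD('n) = 2 * k + 1" and "k \<ge> 1"
    and "singular_contact_form k A U w"
    and "first_type A U w"
    and "structurally_smooth k A U w"
    and "holo_vfield A X"
    and "inf_contact_transf A U w X"
  shows "tangent_to_martinet k A U w X"
  unfolding tangent_to_martinet_def
proof (intro allI ballI)
  fix i c p
  assume "c \<in> A" and p: "p \<in> martinet k A U w \<inter> U i \<inter> fst c"
  have atlas: "holo_atlas A"
    using assms(1) by (simp add: complex_manifold_def)
  then have inj: "inj_on (snd c) (fst c)"
    using \<open>c \<in> A\<close> by (rule holo_atlas_inj_on)
  define Q where "Q = snd c ` (U i \<inter> fst c)"
  obtain h where h: "holo_fun_on Q h"
    and lie: "\<And>y v. y \<in> Q \<Longrightarrow> lie_1form (loc c (X c)) (loc c (w i c)) y v = h y * cpair (loc c (w i c) y) v"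
    using inf_contact_transf_in_chart[OF assms(8) \<open>c \<in> A\<close> inj] unfolding Q_def by metis
  have "frechet_derivative (contact_H k (loc c (w i c))) (at (snd c p)) (loc c (X c) (snd c p)) = 0"
  proof (rule contact_H_derivative_vanishes[OF _ _ h _ lie])
    show "holo_map_on Q (loc c (w i c))"
      using assms(4) \<open>c \<in> A\<close> unfolding singular_contact_form_def holo_1form_def Q_def by blast
    show "holo_map_on Q (loc c (X c))"
      using assms(7) \<open>c \<in> A\<close> h unfolding holo_vfield_def holo_fun_on_def
      by (intro holo_map_on_subset[where V = Q]) (auto simp: Q_def)
    show "snd c p \<in> Q"
      using p by (simp add: Q_def)
  qed (simp_all add: martinet_contact_top_vanishes[OF atlas assms(4) \<open>c \<in> A\<close> p])
  then show "frechet_derivative (Hloc k (w i) c) (at (snd c p)) (X c p) = 0"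
    using p by (simp add: Hloc_def loc_apply[OF inj])
qed

end
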